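(* Under the hypotheses of Theorem 1 (UJSC network, weight rules, interior-point condition for $(\mathrm{ADRCP}^k)$, and stepsizes with $\alpha(t)>0$, $\sum_t\alpha(t)=\infty$, $\sum_t\alpha^2(t)<\infty$, $\alpha$ nonincreasing), let $\theta_i(t)$ be generated by the DPG iteration $\theta_i(t+1)=P_{\Omega_i}\big[\sum_{j}a_{ij}(t)\theta_j(t)-\alpha(t)c\big]$, and write $\theta=(x,u)$ and $h_i(x,u)=f_i(x)-u_i$. Then for all tolerances $\epsilon_1,\epsilon_2,\epsilon_3>0$ there is a finite $T\ge1$ such that for every $t\ge T$ and all $i,j\in\mathcal V$: $\|\theta_i(t)-\theta_j(t)\|\le\epsilon_1$, $\|\theta_i(t)-\theta_i(t-1)\|\le\epsilon_2$, $|h_i(\theta_i(t))-h_i(\theta_i(t-1))|\le\epsilon_3$, and moreover $\theta_i(t)\in\Omega_i$ (local feasibility) for every $t\ge 1$.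
   Context: Network: agents $\mathcal V=\{1,\dots,m\}$. For each time slot $t\in\mathbb Z_{\ge 0}$ there is a directed graph $\mathcal G(t)=(\mathcal V,\mathcal E(t))$; $(j,i)\in\mathcal E(t)$ means agent $j$ can send information to agent $i$ at slot $t$, and $N_i^{in}(t)=\{j:(j,i)\in\mathcal E(t)\}$. UJSC (uniform joint strong connectivity): there is an integer $S>0$ such that for every $t\ge 0$ the graph $(\mathcal V,\mathcal E(t)\cup\cdots\cup\mathcal E(t+S-1))$ is strongly connected. Weight rules: $A(t)=[a_{ij}(t)]\in\mathbb R^{m\times m}$ with $a_{ij}(t)>0$ if $j\in N_i^{in}(t)$ and $a_{ij}(t)=0$ otherwise; $\sum_{j}a_{ij}(t)=1$ for all $i,t$ (row stochastic, not necessarily column stochastic); $(i,i)\in\mathcal E(t)$ for all $i,t$; and there is $\gamma\in(0,1)$ with $a_{ij}(t)\ge\gamma$ whenever $a_{ij}(t)>0$ (in particular $a_{ii}(t)\ge\gamma$). Problem data: $X\subseteq\mathbb R^n$ is nonempty, compact and convex. For each $i\in\mathcal V$: $f_i:\mathbb R^n\to\mathbb R$ is convex; $Y_i\subseteq\mathbb R$ is nonempty, compact, convex; $g_i:\mathbb R^n\times Y_i\to\mathbb R$ is continuous on $X\times Y_i$ and convex in $x$ for each fixed $y$; $Y_i^k\subset Y_i$ is a finite set and $\epsilon_i^k>0$. The problem $(\mathrm{ADRCP}^k)$ is: minimize $\sum_{i=1}^m f_i(x)$ over $x\in X$ subject to $g_i(x,y)\le-\epsilon_i^k$ for all $y\in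 Y_i^k$ and all $i$. Interior-point condition: the feasible set of $(\mathrm{ADRCP}^k)$ is nonempty and there is $\tilde x$ in it with $g_i(\tilde x,y)<-\epsilon_i^k$ for all $y\in Y_i^k$, $i\in\mathcal V$. Epigraphic reformulation: $\theta=(x,u)\in\Theta=X\times\mathbb R^m$; $\Omega_i=\{(x,u)\in\Theta: f_i(x)-u_i\le 0,\ g_i(x,y)\le-\epsilon_i^k\ \forall y\in Y_i^k\}$; $\Omega=\bigcap_{i=1}^m\Omega_i$; $c=(0_n,\tfrac1m\mathbf 1_m)\in\mathbb R^{n+m}$ and $f_0(\theta)=c^\top\theta=\tfrac1m\sum_i u_i$. $\Omega^*$ is the set of minimizers of $f_0$ over $\Omega$ and $f_0^*$ the optimal value. $P_K$ denotes Euclidean projection onto a closed convex set $K$. Initial points $\theta_i(0)\in\mathbb R^{n+m}$ are arbitrary. *)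

theory Defs
  imports "HOL-Analysis.Analysis"
begin

text \<open>Agents are the elements of a finite type 'm (so m = CARD('m));
  decision variables x live in real^'n; theta = (x,u) in real^'n \<times> real^'m,
  whose product norm is the Euclidean norm of R^(n+m).\<close>

definition Omega_i ::
  "(real^'n) set \<Rightarrow> ('m \<Rightarrow> real^'n \<Rightarrow> real) \<Rightarrow> ('m \<Rightarrow> real^'n \<Rightarrow> real \<Rightarrow> real)
   \<Rightarrow> ('m \<Rightarrow> real set) \<Rightarrow> ('m \<Rightarrow> real) \<Rightarrow> 'm \<Rightarrow> ((real^'n) \<times> (real^'m)) set" where
  "Omega_i X f g Yk eps i =
     {(x, u). x \<in> X \<and> f i x - u $ i \<le> 0 \<and> (\<forall>y\<in>Yk i. g i x y \<le> - eps i)}"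

definition cvec :: "(real^'n) \<times> (real^'m)" where
  "cvec = (0, (\<chi> i. 1 / real CARD('m)))"

definition strongly_connected_graph :: "('m \<times> 'm) set \<Rightarrow> bool" where
  "strongly_connected_graph E \<longleftrightarrow> (\<forall>i j. (i, j) \<in> E\<^sup>*)"

definition UJSC :: "(nat \<Rightarrow> ('m \<times> 'm) set) \<Rightarrow> bool" where
  "UJSC E \<longleftrightarrow> (\<exists>S::nat. S > 0 \<and>
      (\<forall>t. strongly_connected_graph (\<Union>s\<in>{t..<t+S}. E s)))"

definition weight_rules :: "(nat \<Rightarrow> ('m \<times> 'm) set) \<Rightarrow> (nat \<Rightarrow> 'm \<Rightarrow> 'm \<Rightarrow> real) \<Rightarrow> bool" where
  "weight_rules E a \<longleftrightarrow>
     (\<forall>t i j. ((j, i) \<in> E t \<longrightarrow> a t i j > 0) \<and> ((j, i) \<notin> E t \<longrightarrow> a t i j = 0)) \<and>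
     (\<forall>t i. (\<Sum>j\<in>UNIV. a t i j) = 1) \<and>
     (\<forall>t i. (i, i) \<in> E t) \<and>
     (\<exists>\<gamma>. 0 < \<gamma> \<and> \<gamma> < 1 \<and> (\<forall>t i j. a t i j > 0 \<longrightarrow> a t i j \<ge> \<gamma>))"

end

theory Submission
  imports Defs
begin

text \<open>Each DPG step averages the neighbours' iterates with row-stochastic weights, moves by
  \<alpha>(t) against c and projects; write it as averaging, step and a projection residual. Two
  estimates are coupled. Over every window of CARD('m) S + 1 steps, joint strong connectivity
  contracts the disagreement D(t) (the diameter of the iterates) by the factor
  1 - \<gamma> ^ (CARD('m) S + 1), up to the accumulated residuals. Against a fixed optimal point z,
  the largest squared distance to z drops over such a window by a multiple of the largest squared
  residual, up to a drift of order \<alpha>(t) D(t) + \<alpha>(t)^2; the factor in front of D(t) comes from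
  Slater's condition, which bounds how far points with disagreement D(t) can undercut the optimal
  value. Telescoping bounds the squared residuals by the sum of \<alpha> D, and square summability of
  \<alpha> then makes the squares of D summable. So D(t) tends to 0, the increments (at most
  2 D(t) + 2 \<alpha>(t) |c|) tend to 0, and so do the increments of h_i, since f_i is Lipschitz on the
  compact set X. Feasibility is immediate from the projections.\<close>

section \<open>Stochastic weights and elementary estimates\<close>

definition stochastic :: "('i::finite \<Rightarrow> real) \<Rightarrow> bool" where
  "stochastic p \<longleftrightarrow> (\<forall>j. 0 \<le> p j) \<and> (\<Sum>j\<in>UNIV. p j) = 1"

lemma stochasticD:
  assumes "stochastic p"
  shows "0 \<le> p j" "(\<Sum>j\<in>UNIV. p j) = 1"
  using assms by (auto simp: stochastic_def)

lemma stochastic_sum_const [simp]: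
  "stochastic p \<Longrightarrow> (\<Sum>j\<in>UNIV. p j * c) = c"
  by (simp add: stochastic_def flip: sum_distrib_right)

lemma stochastic_indicator: "stochastic (\<lambda>j. if j = i then 1 else 0)"
  by (simp add: stochastic_def)

lemma stochastic_mean_sq_le:
  fixes r :: "'i::finite \<Rightarrow> real"
  assumes "stochastic p"
  shows "(\<Sum>j\<in>UNIV. p j * r j)\<^sup>2 \<le> (\<Sum>j\<in>UNIV. p j * (r j)\<^sup>2)"
  using convex_on_sum[OF finite _ convex_power2, of UNIV p r] assms
  by (simp add: stochastic_def)

lemma norm_diff_stochastic_combinations_le:
  fixes x :: "'i::finite \<Rightarrow> 'a::real_normed_vector"
  assumes p: "stochastic p" and q: "stochastic q" and \<Delta>: "\<And>j k. norm (x j - x k) \<le> \<Delta>"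
  shows "norm ((\<Sum>j\<in>UNIV. p j *\<^sub>R x j) - (\<Sum>k\<in>UNIV. q k *\<^sub>R x k)) \<le> \<Delta>"
proof -
  have in_cball: "(\<Sum>j\<in>UNIV. r j *\<^sub>R x j) \<in> cball y \<Delta>"
    if "stochastic r" "\<And>j. x j \<in> cball y \<Delta>" for r y
    using that by (intro convex_sum) (auto simp: stochastic_def)
  have "(\<Sum>j\<in>UNIV. p j *\<^sub>R x j) \<in> cball (x k) \<Delta>" for k
    using \<Delta> by (intro in_cball[OF p]) (simp add: dist_norm)
  then have "(\<Sum>k\<in>UNIV. q k *\<^sub>R x k) \<in> cball (\<Sum>j\<in>UNIV. p j *\<^sub>R x j) \<Delta>"
    by (intro in_cball[OF q]) (simp add: dist_commute)
  then show ?thesis by (simp add: dist_norm)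
qed

lemma sum_lessThan_add_split:
  fixes f :: "nat \<Rightarrow> 'a::comm_monoid_add"
  shows "(\<Sum>\<tau><m + n. f \<tau>) = (\<Sum>\<tau><m. f \<tau>) + (\<Sum>\<tau><n. f (m + \<tau>))"
  by (induction n) (simp_all add: add_ac)

lemma sum_lessThan_diff_shift:
  fixes Q :: "nat \<Rightarrow> real"
  shows "(\<Sum>s<N. Q s - Q (s + L)) = (\<Sum>j<L. Q j - Q (N + j))"
proof (induction N)
  case (Suc N)
  have "(\<Sum>j<L. Q (N + j) - Q (Suc N + j)) = Q N - Q (N + L)"
    using sum_lessThan_telescope'[of "\<lambda>j. Q (N + j)" L] by simp
  then show ?case using Suc by (simp add: sum_subtractf algebra_simps)
qed simp

lemma sum_window_sums_le:
  fixes g :: "nat \<Rightarrow> real"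
  assumes g: "\<And>s. 0 \<le> g s"
  shows "(\<Sum>s<N. \<Sum>j<Suc L. g (s + j)) \<le> Suc L * (\<Sum>\<sigma><N + L. g \<sigma>)"
proof -
  have "(\<Sum>s<N. g (s + j)) \<le> (\<Sum>\<sigma><N + L. g \<sigma>)" if "j < Suc L" for j
  proof -
    have "(\<Sum>s<N. g (s + j)) = (\<Sum>\<sigma>\<in>(\<lambda>s. s + j) ` {..<N}. g \<sigma>)"
      by (simp add: sum.reindex)
    also have "\<dots> \<le> (\<Sum>\<sigma><N + L. g \<sigma>)"
      using that by (intro sum_mono2) (auto simp: g)
    finally show ?thesis .
  qed
  then have "(\<Sum>j<Suc L. \<Sum>s<N. g (s + j)) \<le> (\<Sum>j<Suc L. \<Sum>\<sigma><N + L. g \<sigma>)"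
    by (intro sum_mono) auto
  then show ?thesis by (simp add: sum.swap[of _ "{..<N}"])
qed

lemma convex_combination_sq_le:
  fixes a b \<rho> :: real
  assumes "0 \<le> \<rho>" "\<rho> < 1"
  shows "(\<rho> * a + b)\<^sup>2 \<le> \<rho> * a\<^sup>2 + b\<^sup>2 / (1 - \<rho>)"
proof -
  define c where "c = b / (1 - \<rho>)"
  have "\<rho> * a\<^sup>2 + (1 - \<rho>) * c\<^sup>2 - (\<rho> * a + (1 - \<rho>) * c)\<^sup>2 = \<rho> * (1 - \<rho>) * (a - c)\<^sup>2"
    by (simp add: power2_eq_square algebra_simps)
  moreover have "0 \<le> \<rho> * (1 - \<rho>) * (a - c)\<^sup>2" using assms by simp
  moreover have "b = (1 - \<rho>) * c" "(1 - \<rho>) * c\<^sup>2 = b\<^sup>2 / (1 - \<rho>)"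
    using assms by (simp_all add: c_def power2_eq_square)
  ultimately show ?thesis by simp
qed

lemma finite_argmax:
  fixes h :: "'m::finite \<Rightarrow> 'b::linorder"
  obtains k where "\<And>j. h j \<le> h k"
proof -
  have "Max (range h) \<in> range h" by (intro Max_in) auto
  then obtain k where "h k = Max (range h)" by (metis rangeE)
  moreover have "h j \<le> Max (range h)" for j by (rule Max_ge) auto
  ultimately show thesis using that by metis
qed

lemma inner_sgn_self: "inner x (sgn x) = norm x"
  by (cases "x = 0") (simp_all add: sgn_div_norm power2_eq_square flip: power2_norm_eq_inner)

lemma rtrancl_exits_set:
  assumes "(x, y) \<in> R\<^sup>*" "x \<in> A" "y \<notin> A"
  obtains u v where "(u, v) \<in> R" "u \<in> A" "v \<notin> A"
  using assms by (induction rule: rtrancl_induct) auto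

lemma incseq_growing_sets_fill_UNIV:
  fixes St :: "nat \<Rightarrow> 'm::finite set"
  assumes mono: "incseq St" and nonempty: "St 0 \<noteq> {}"
    and grow: "\<And>n. St n \<noteq> UNIV \<Longrightarrow> \<exists>i. i \<notin> St n \<and> i \<in> St (n + S)"
  shows "St (CARD('m) * S) = UNIV"
proof -
  have card: "min (Suc k) CARD('m) \<le> card (St (k * S))" for k
  proof (induction k)
    case 0
    then show ?case using nonempty by (simp add: Suc_le_eq card_gt_0_iff)
  next
    case (Suc k)
    have sub: "St (k * S) \<subseteq> St (Suc k * S)" using mono by (simp add: incseq_def)
    show ?case
    proof (cases "St (k * S) = UNIV")
      case True
      then have "St (Suc k * S) = UNIV" using sub by auto
      then show ?thesis by simp
    next
      case False
      then obtain i where i: "i \<notin> St (k * S)" "i \<in> St (k * S + S)" using grow by blast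
      then have "i \<in> St (Suc k * S)" by (simp add: add.commute)
      then have "insert i (St (k * S)) \<subseteq> St (Suc k * S)" using sub by blast
      then have "card (insert i (St (k * S))) \<le> card (St (Suc k * S))" by (intro card_mono) auto
      then have "Suc (card (St (k * S))) \<le> card (St (Suc k * S))"
        using i(1) by simp
      then show ?thesis using Suc by simp
    qed
  qed
  show ?thesis
    using card[of "CARD('m)"] card_seteq[of UNIV "St (CARD('m) * S)"] by auto
qed

section \<open>Convex functions and projections\<close>

text \<open>Extending the segment from x through y by unit length beyond y, convexity along the line
  bounds the slope of f by the oscillation of f on the unit ball around y.\<close>

lemma convex_on_slope_le:
  fixes f :: "'a::real_normed_vector \<Rightarrow> real"
  assumes f: "convex_on UNIV f" and ball: "\<And>w. w \<in> cball y 1 \<Longrightarrow> \<bar>f w\<bar> \<le> B"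
    and x: "\<bar>f x\<bar> \<le> B"
  shows "f y - f x \<le> 2 * B * dist x y"
proof (cases "x = y")
  case False
  define d where "d = norm (y - x)"
  have d: "d > 0" using False by (simp add: d_def)
  define w where "w = y + (1/d) *\<^sub>R (y - x)"
  have w: "w \<in> cball y 1" using d by (simp add: w_def d_def dist_norm)
  define t where "t = d / (1 + d)"
  have t: "0 \<le> t" "t \<le> 1" "t \<le> d" using d by (auto simp: t_def field_simps)
  have "(1 - t) *\<^sub>R x + t *\<^sub>R w = y"
    using d by (simp add: t_def w_def field_simps scaleR_add_right algebra_simps
                 flip: scaleR_add_left)
  then have "f y \<le> (1 - t) * f x + t * f w"
    using convex_onD[OF f t(1,2), of x w] by simp
  then have "f y - f x \<le> t * (f w - f x)" by (simp add: algebra_simps)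
  also have "\<dots> \<le> t * (2 * B)"
    using ball[OF w] x t by (intro mult_left_mono) auto
  also have "\<dots> \<le> d * (2 * B)"
    using t x by (intro mult_right_mono) auto
  finally show ?thesis by (simp add: d_def dist_norm norm_minus_commute mult.commute)
qed (use x in simp)

lemma convex_on_lipschitz_on_compact:
  fixes f :: "'a::euclidean_space \<Rightarrow> real"
  assumes f: "convex_on UNIV f" and K: "compact K"
  shows "\<exists>L. L-lipschitz_on K f"
proof -
  define K' where "K' = {x + y | x y. x \<in> K \<and> y \<in> cball 0 1}"
  have "compact K'" unfolding K'_def by (rule compact_sums[OF K compact_cball])
  moreover have "continuous_on K' f"
    using convex_on_continuous[OF open_UNIV f] continuous_on_subset by blast
  ultimately have "bounded (f ` K')"
    by (simp add: compact_continuous_image compact_imp_bounded)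
  then obtain B where B: "0 < B" "\<And>z. z \<in> K' \<Longrightarrow> \<bar>f z\<bar> \<le> B"
    unfolding bounded_pos by auto
  have K_sub: "K \<subseteq> K'"
    unfolding K'_def by force
  have ball: "cball y 1 \<subseteq> K'" if "y \<in> K" for y
  proof
    fix w assume "w \<in> cball y 1"
    then have "w - y \<in> cball 0 1" by (simp add: dist_norm norm_minus_commute)
    then show "w \<in> K'" unfolding K'_def using that by force
  qed
  have slope: "f y - f x \<le> 2 * B * dist x y" if "x \<in> K" "y \<in> K" for x y
    using B(2) ball[OF that(2)] K_sub that by (intro convex_on_slope_le[OF f]) auto
  have "(2 * B)-lipschitz_on K f"
  proof (rule lipschitz_onI)
    fix x y assume "x \<in> K" "y \<in> K"
    then show "dist (f x) (f y) \<le> 2 * B * dist x y"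
      using slope[of x y] slope[of y x] by (simp add: dist_real_def dist_commute abs_le_iff)
  qed (use B(1) in simp)
  then show ?thesis by blast
qed

lemma finite_family_lipschitz_on:
  assumes "finite I" and "\<And>k. k \<in> I \<Longrightarrow> \<exists>L. L-lipschitz_on K (F k)"
  shows "\<exists>L. \<forall>k\<in>I. L-lipschitz_on K (F k)"
proof -
  obtain Lk where Lk: "\<And>k. k \<in> I \<Longrightarrow> (Lk k)-lipschitz_on K (F k)"
    using assms(2) by metis
  have "(\<Sum>k\<in>I. Lk k)-lipschitz_on K (F k)" if "k \<in> I" for k
    using Lk that assms(1)
    by (intro lipschitz_on_le[OF Lk] member_le_sum) (auto intro: lipschitz_on_nonneg)
  then show ?thesis by blast
qed

lemma finite_slack:
  fixes h :: "'a \<Rightarrow> real"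
  assumes "finite A" and "\<And>y. y \<in> A \<Longrightarrow> h y < 0"
  shows "\<exists>\<sigma>>0. \<forall>y\<in>A. h y \<le> - \<sigma>"
proof (intro exI conjI ballI)
  define \<sigma> where "\<sigma> = Min (insert 1 ((\<lambda>y. - h y) ` A))"
  show "0 < \<sigma>" using assms unfolding \<sigma>_def by (subst Min_gr_iff) auto
  show "h y \<le> - \<sigma>" if "y \<in> A" for y
  proof -
    have "\<sigma> \<le> - h y" unfolding \<sigma>_def using assms(1) that by (intro Min_le) auto
    then show ?thesis by simp
  qed
qed

lemma convex_combination_restores_feasibility:
  fixes h :: "'a::real_vector \<Rightarrow> real"
  assumes h: "convex_on UNIV h" and x: "h x \<le> s" and xt: "h xt \<le> - \<sigma>" and s: "0 \<le> s" and \<sigma>: "0 < \<sigma>"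
  shows "h ((1 - s / (s + \<sigma>)) *\<^sub>R x + (s / (s + \<sigma>)) *\<^sub>R xt) \<le> 0"
proof -
  define t where "t = s / (s + \<sigma>)"
  have t: "0 \<le> t" "t \<le> 1" using s \<sigma> by (auto simp: t_def)
  have "h ((1 - t) *\<^sub>R x + t *\<^sub>R xt) \<le> (1 - t) * h x + t * h xt"
    by (rule convex_onD[OF h t]) auto
  also have "\<dots> \<le> (1 - t) * s + t * (- \<sigma>)"
    using t x xt by (intro add_mono mult_left_mono) auto
  also have "\<dots> = 0"
    using s \<sigma> by (simp add: t_def field_simps)
  finally show ?thesis by (simp add: t_def)
qed

lemma closest_point_sq_dist_le:
  fixes S :: "'a::euclidean_space set"
  assumes "convex S" "closed S" "z \<in> S"
  shows "(norm (closest_point S v - z))\<^sup>2 + (norm (closest_point S v - v))\<^sup>2 \<le> (norm (v - z))\<^sup>2"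
proof -
  let ?p = "closest_point S v"
  have "inner (v - ?p) (z - ?p) \<le> 0" by (rule closest_point_dot[OF assms])
  moreover have "v - z = (v - ?p) - (z - ?p)" by simp
  ultimately show ?thesis
    unfolding power2_norm_eq_inner
    by (simp add: inner_diff_left inner_diff_right inner_commute algebra_simps)
qed

lemma projected_step_sq_dist_le:
  fixes x :: "'i::finite \<Rightarrow> 'v::euclidean_space"
  assumes K: "convex K" "closed K" "z \<in> K" and p: "stochastic p" and \<alpha>: "0 \<le> \<alpha>"
    and gap: "\<And>j. - \<beta> \<le> inner (x j - z) c"
  defines "v \<equiv> (\<Sum>j\<in>UNIV. p j *\<^sub>R x j) - \<alpha> *\<^sub>R c"
  shows "(norm (closest_point K v - z))\<^sup>2 + (norm (closest_point K v - v))\<^sup>2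
           \<le> (\<Sum>j\<in>UNIV. p j * (norm (x j - z))\<^sup>2) + 2 * \<alpha> * \<beta> + \<alpha>\<^sup>2 * (norm c)\<^sup>2"
proof -
  define w where "w = (\<Sum>j\<in>UNIV. p j *\<^sub>R (x j - z))"
  have "(\<Sum>j\<in>UNIV. p j *\<^sub>R z) = z"
    using p by (simp add: stochastic_def flip: scaleR_sum_left)
  then have vz: "v - z = w - \<alpha> *\<^sub>R c"
    by (simp add: v_def w_def scaleR_diff_right sum_subtractf)
  have "norm w \<le> (\<Sum>j\<in>UNIV. p j * norm (x j - z))"
    using norm_sum[of "\<lambda>j. p j *\<^sub>R (x j - z)" UNIV] p by (simp add: w_def stochastic_def)
  then have "(norm w)\<^sup>2 \<le> (\<Sum>j\<in>UNIV. p j * norm (x j - z))\<^sup>2"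
    by (simp add: power_mono)
  also have "\<dots> \<le> (\<Sum>j\<in>UNIV. p j * (norm (x j - z))\<^sup>2)"
    by (rule stochastic_mean_sq_le[OF p])
  finally have w_sq: "(norm w)\<^sup>2 \<le> (\<Sum>j\<in>UNIV. p j * (norm (x j - z))\<^sup>2)" .
  have "- \<beta> \<le> inner w c"
  proof -
    have "(\<Sum>j\<in>UNIV. p j * - \<beta>) \<le> (\<Sum>j\<in>UNIV. p j * inner (x j - z) c)"
      using p gap by (intro sum_mono mult_left_mono) (auto simp: stochastic_def)
    moreover have "(\<Sum>j\<in>UNIV. p j * - \<beta>) = - \<beta>" by (rule stochastic_sum_const[OF p])
    ultimately show ?thesis by (simp add: w_def inner_sum_left)
  qed
  then have "- 2 * \<alpha> * inner w c \<le> 2 * \<alpha> * \<beta>"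
    using mult_left_mono[of "- \<beta>" "inner w c" \<alpha>] \<alpha> by simp
  moreover have "(norm (v - z))\<^sup>2 = (norm w)\<^sup>2 - 2 * \<alpha> * inner w c + \<alpha>\<^sup>2 * (norm c)\<^sup>2"
    unfolding vz power2_norm_eq_inner
    by (simp add: inner_diff_left inner_diff_right inner_commute power2_eq_square algebra_simps)
  ultimately have "(norm (v - z))\<^sup>2 \<le> (\<Sum>j\<in>UNIV. p j * (norm (x j - z))\<^sup>2) + 2 * \<alpha> * \<beta> + \<alpha>\<^sup>2 * (norm c)\<^sup>2"
    using w_sq by linarith
  then show ?thesis using closest_point_sq_dist_le[OF K, of v] by linarith
qed

section \<open>Consensus under uniform joint strong connectivity\<close>

locale ujsc_weights =
  fixes E :: "nat \<Rightarrow> ('m::finite \<times> 'm) set" and a :: "nat \<Rightarrow> 'm \<Rightarrow> 'm \<Rightarrow> real"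
    and \<gamma> :: real and S :: nat
  assumes window_connected: "\<And>t. strongly_connected_graph (\<Union>s\<in>{t..<t+S}. E s)"
    and row_stochastic: "\<And>t i. stochastic (a t i)"
    and edge_weight: "\<And>t i j. (j, i) \<in> E t \<Longrightarrow> \<gamma> \<le> a t i j"
    and self_weight: "\<And>t i. \<gamma> \<le> a t i i"
    and gamma_pos: "0 < \<gamma>"
begin

lemma weight_nonneg: "0 \<le> a t i j"
  using row_stochastic stochasticD by blast

lemma gamma_pow_le_one: "\<gamma> ^ n \<le> 1"
proof -
  have "a 0 undefined undefined \<le> (\<Sum>j\<in>UNIV. a 0 undefined j)"
    by (intro member_le_sum weight_nonneg) auto
  then have "\<gamma> \<le> 1" using self_weight stochasticD(2)[OF row_stochastic] by (metis order_trans)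
  then show ?thesis using gamma_pos by (simp add: power_le_one)
qed

lemma shift: "ujsc_weights (\<lambda>t. E (Suc t)) (\<lambda>t. a (Suc t)) \<gamma> S"
proof
  show "strongly_connected_graph (\<Union>s\<in>{t..<t+S}. E (Suc s))" for t
    using window_connected[of "Suc t"] by (simp add: image_Suc_atLeastLessThan flip: image_image)
qed (use row_stochastic edge_weight self_weight gamma_pos in auto)

lemma averaging_upper_bound:
  fixes y :: "nat \<Rightarrow> 'm \<Rightarrow> real"
  assumes step: "\<And>\<tau> i. y (Suc (s + \<tau>)) i \<le> (\<Sum>j\<in>UNIV. a (s + \<tau>) i j * y (s + \<tau>) j) + b (s + \<tau>)"
    and init: "\<And>i. y s i \<le> U"
  shows "y (s + n) i \<le> U + (\<Sum>\<tau><n. b (s + \<tau>))"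
proof (induction n arbitrary: i)
  case (Suc n)
  have "y (s + Suc n) i \<le> (\<Sum>j\<in>UNIV. a (s + n) i j * y (s + n) j) + b (s + n)"
    using step[of n i] by simp
  also have "(\<Sum>j\<in>UNIV. a (s + n) i j * y (s + n) j)
      \<le> (\<Sum>j\<in>UNIV. a (s + n) i j * (U + (\<Sum>\<tau><n. b (s + \<tau>))))"
    by (intro sum_mono mult_left_mono Suc weight_nonneg)
  finally show ?case using row_stochastic by simp
qed (use init in simp)

lemma averaged_deficit_le:
  fixes y :: "'m \<Rightarrow> real"
  assumes bound: "\<And>j. y j \<le> U" and deficit: "y l \<le> U - q" and q: "0 \<le> q"
    and weight: "\<gamma> \<le> a t i l"
  shows "(\<Sum>j\<in>UNIV. a t i j * y j) \<le> U - \<gamma> * q"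
proof -
  have "(\<Sum>j\<in>UNIV. a t i j * y j) \<le> (\<Sum>j\<in>UNIV. a t i j * (U - (if j = l then q else 0)))"
    using bound deficit by (intro sum_mono mult_left_mono weight_nonneg) auto
  also have "\<dots> = (\<Sum>j\<in>UNIV. a t i j * U) - (\<Sum>j\<in>UNIV. a t i j * (if j = l then q else 0))"
    unfolding right_diff_distrib sum_subtractf ..
  also have "\<dots> = U - a t i l * q"
    using stochasticD(2)[OF row_stochastic] by (simp add: if_distrib cong: if_cong flip: sum_distrib_right)
  also have "\<dots> \<le> U - \<gamma> * q"
    using weight q by (simp add: mult_right_mono)
  finally show ?thesis .
qed

lemma spreading_sets_fill_UNIV:
  fixes St :: "nat \<Rightarrow> 'm set"
  assumes spread: "\<And>n i l. l \<in> St n \<Longrightarrow> (l, i) \<in> E (s + n) \<Longrightarrow> i \<in> St (Suc n)"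
    and stay: "\<And>n i. i \<in> St n \<Longrightarrow> i \<in> St (Suc n)" and start: "j0 \<in> St 0"
    and n: "CARD('m) * S \<le> n"
  shows "St n = UNIV"
proof -
  have mono: "incseq St" using stay by (intro incseq_SucI) blast
  have j0: "j0 \<in> St n" for n using start incseqD[OF mono, of 0 n] by auto
  have grow: "\<exists>i. i \<notin> St n \<and> i \<in> St (n + S)" if ne: "St n \<noteq> UNIV" for n
  proof -
    obtain i0 where i0: "i0 \<notin> St n" using ne by auto
    have path: "(j0, i0) \<in> (\<Union>t\<in>{s + n..<s + n + S}. E t)\<^sup>*"
      using window_connected[of "s + n"] unfolding strongly_connected_graph_def by blast
    obtain u v where "(u, v) \<in> (\<Union>t\<in>{s + n..<s + n + S}. E t)" "u \<in> St n" "v \<notin> St n"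
      using path j0[of n] i0 by (rule rtrancl_exits_set)
    then obtain t where uv: "u \<in> St n" "v \<notin> St n" "(u, v) \<in> E t" "t \<in> {s + n..<s + n + S}"
      by blast
    define k where "k = t - (s + n)"
    have "u \<in> St (n + k)" using incseqD[OF mono, of n "n + k"] uv(1) by auto
    moreover have "t = s + (n + k)" using uv(4) by (simp add: k_def)
    ultimately have "v \<in> St (Suc (n + k))" using spread uv(3) by simp
    moreover have "St (Suc (n + k)) \<subseteq> St (n + S)"
      using uv(4) by (intro incseqD[OF mono]) (auto simp: k_def)
    ultimately show ?thesis using uv(2) by blast
  qed
  have "St (CARD('m) * S) = UNIV"
    using j0 by (intro incseq_growing_sets_fill_UNIV[OF mono _ grow]) auto
  then show ?thesis using incseqD[OF mono n] by auto
qed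

text \<open>A deficit p below the common upper bound at one agent reaches every agent within
  CARD('m) windows of length S, since along an edge it is passed on with weight at least \<gamma>.\<close>

lemma deficit_propagation:
  fixes y :: "nat \<Rightarrow> 'm \<Rightarrow> real"
  assumes step: "\<And>\<tau> i. y (Suc (s + \<tau>)) i \<le> (\<Sum>j\<in>UNIV. a (s + \<tau>) i j * y (s + \<tau>) j) + b (s + \<tau>)"
    and init: "\<And>i. y s i \<le> U" and deficit: "y s j0 \<le> U - p" and p: "0 \<le> p"
    and n: "CARD('m) * S \<le> n"
  shows "y (s + n) i \<le> U + (\<Sum>\<tau><n. b (s + \<tau>)) - \<gamma> ^ n * p"
proof -
  define Ub where "Ub n = U + (\<Sum>\<tau><n. b (s + \<tau>))" for n
  define St where "St n = {i. y (s + n) i \<le> Ub n - \<gamma> ^ n * p}" for n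
  have bound: "y (s + n) i \<le> Ub n" for n i
    unfolding Ub_def by (rule averaging_upper_bound[OF step init])
  have pass: "i \<in> St (Suc n)" if l: "l \<in> St n" and al: "\<gamma> \<le> a (s + n) i l" for n i l
  proof -
    have "y (s + Suc n) i \<le> (\<Sum>j\<in>UNIV. a (s + n) i j * y (s + n) j) + b (s + n)"
      using step[of n i] by simp
    also have "(\<Sum>j\<in>UNIV. a (s + n) i j * y (s + n) j) \<le> Ub n - \<gamma> * (\<gamma> ^ n * p)"
      using bound l gamma_pos p al by (intro averaged_deficit_le) (auto simp: St_def)
    finally show ?thesis by (simp add: St_def Ub_def)
  qed
  have "St n = UNIV"
  proof (rule spreading_sets_fill_UNIV[OF _ _ _ n])
    show "i \<in> St (Suc n)" if "l \<in> St n" "(l, i) \<in> E (s + n)" for n i l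
      using pass edge_weight that by blast
    show "i \<in> St (Suc n)" if "i \<in> St n" for n i
      using pass self_weight that by blast
    show "j0 \<in> St 0" using deficit by (simp add: St_def Ub_def)
  qed
  then show ?thesis by (auto simp: St_def Ub_def)
qed

lemma scalar_consensus_contraction:
  fixes y :: "nat \<Rightarrow> 'm \<Rightarrow> real"
  assumes step: "\<And>\<tau> k. \<bar>y (Suc \<tau>) k - (\<Sum>j\<in>UNIV. a \<tau> k j * y \<tau> j) - c \<tau>\<bar> \<le> \<epsilon> \<tau>"
    and spread: "\<And>j k. y s j - y s k \<le> \<Delta>" and n: "CARD('m) * S \<le> n"
  shows "y (s + n) i - y (s + n) l \<le> (1 - \<gamma> ^ n) * \<Delta> + 2 * (\<Sum>\<tau><n. \<epsilon> (s + \<tau>))"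
proof -
  obtain jmax where jmax: "\<And>j. y s j \<le> y s jmax"
    using finite_argmax[of "y s"] by blast
  obtain jmin where jmin: "\<And>j. y s jmin \<le> y s j"
    using finite_argmax[of "\<lambda>j. - y s j"] by auto
  have up: "y (s + n) i \<le> y s jmax + (\<Sum>\<tau><n. c (s + \<tau>) + \<epsilon> (s + \<tau>)) - \<gamma> ^ n * (y s jmax - y s jmin)"
  proof (rule deficit_propagation[where b="\<lambda>\<tau>. c \<tau> + \<epsilon> \<tau>", OF _ _ _ _ n])
    show "y (Suc (s + \<tau>)) k \<le> (\<Sum>j\<in>UNIV. a (s + \<tau>) k j * y (s + \<tau>) j) + (c (s + \<tau>) + \<epsilon> (s + \<tau>))"
      for \<tau> k
      using abs_le_D1[OF step[of "s + \<tau>" k]] by simp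
  qed (use jmax jmin in auto)
  have low: "- y (s + n) l \<le> - y s jmin + (\<Sum>\<tau><n. \<epsilon> (s + \<tau>) - c (s + \<tau>))"
  proof (rule averaging_upper_bound[where y="\<lambda>\<tau> k. - y \<tau> k"])
    show "- y (Suc (s + \<tau>)) k \<le> (\<Sum>j\<in>UNIV. a (s + \<tau>) k j * - y (s + \<tau>) j) + (\<epsilon> (s + \<tau>) - c (s + \<tau>))"
      for \<tau> k
      using abs_le_D2[OF step[of "s + \<tau>" k]] by (simp add: sum_negf)
  qed (use jmin in auto)
  have "(1 - \<gamma> ^ n) * (y s jmax - y s jmin) \<le> (1 - \<gamma> ^ n) * \<Delta>"
    using spread gamma_pow_le_one by (intro mult_left_mono) auto
  then show ?thesis
    using up low by (simp add: sum.distrib sum_subtractf algebra_simps)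
qed

lemma consensus_contraction:
  fixes \<theta> :: "nat \<Rightarrow> 'm \<Rightarrow> 'v::real_inner"
  assumes step: "\<And>\<tau> k. norm (\<theta> (Suc \<tau>) k - (\<Sum>j\<in>UNIV. a \<tau> k j *\<^sub>R \<theta> \<tau> j) - c \<tau>) \<le> \<epsilon> \<tau>"
    and spread: "\<And>j k. norm (\<theta> s j - \<theta> s k) \<le> \<Delta>" and n: "CARD('m) * S \<le> n"
  shows "norm (\<theta> (s + n) i - \<theta> (s + n) l) \<le> (1 - \<gamma> ^ n) * \<Delta> + 2 * (\<Sum>\<tau><n. \<epsilon> (s + \<tau>))"
proof -
  define u where "u = sgn (\<theta> (s + n) i - \<theta> (s + n) l)"
  have inner_le: "\<bar>inner v u\<bar> \<le> norm v" for v
    using Cauchy_Schwarz_ineq2[of v u] by (auto simp: u_def norm_sgn split: if_splits)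
  have "norm (\<theta> (s + n) i - \<theta> (s + n) l) = inner (\<theta> (s + n) i) u - inner (\<theta> (s + n) l) u"
    by (simp add: u_def inner_sgn_self flip: inner_diff_left)
  also have "\<dots> \<le> (1 - \<gamma> ^ n) * \<Delta> + 2 * (\<Sum>\<tau><n. \<epsilon> (s + \<tau>))"
  proof (rule scalar_consensus_contraction[where c="\<lambda>\<tau>. inner (c \<tau>) u", OF _ _ n])
    show "\<bar>inner (\<theta> (Suc \<tau>) k) u - (\<Sum>j\<in>UNIV. a \<tau> k j * inner (\<theta> \<tau> j) u) - inner (c \<tau>) u\<bar> \<le> \<epsilon> \<tau>"
      for \<tau> k
      using inner_le[of "\<theta> (Suc \<tau>) k - (\<Sum>j\<in>UNIV. a \<tau> k j *\<^sub>R \<theta> \<tau> j) - c \<tau>"] step[of \<tau> k]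
      by (simp add: inner_diff_left inner_sum_left)
    show "inner (\<theta> s j) u - inner (\<theta> s k) u \<le> \<Delta>" for j k
      using inner_le[of "\<theta> s j - \<theta> s k"] spread[of j k] by (simp add: inner_diff_left)
  qed
  finally show ?thesis .
qed

end

lemma ujsc_weights_of_weight_rules:
  assumes "weight_rules E a" "UJSC E"
  obtains \<gamma> S where "ujsc_weights E a \<gamma> S"
proof -
  obtain \<gamma> where \<gamma>: "0 < \<gamma>" "\<And>t i j. a t i j > 0 \<Longrightarrow> \<gamma> \<le> a t i j"
    using assms(1) unfolding weight_rules_def by blast
  obtain S where S: "\<And>t. strongly_connected_graph (\<Union>s\<in>{t..<t+S}. E s)"
    using assms(2) unfolding UJSC_def by blast
  have "ujsc_weights E a \<gamma> S"
  proof
    show "strongly_connected_graph (\<Union>s\<in>{t..<t+S}. E s)" for t by (rule S)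
    show "stochastic (a t i)" for t i
      using assms(1) unfolding weight_rules_def stochastic_def by (metis order.strict_implies_order order_refl)
    show "\<gamma> \<le> a t i j" if "(j, i) \<in> E t" for t i j
      using assms(1) that \<gamma>(2) unfolding weight_rules_def by blast
    show "\<gamma> \<le> a t i i" for t i
      using assms(1) \<gamma>(2) unfolding weight_rules_def by blast
  qed (rule \<gamma>(1))
  then show ?thesis by (rule that)
qed

section \<open>Summability from windowed contraction\<close>

lemma window_contraction_sq_sum_le:
  fixes D \<epsilon> :: "nat \<Rightarrow> real"
  assumes D: "\<And>s. 0 \<le> D s" and \<rho>: "0 \<le> \<rho>" "\<rho> < 1"
    and contraction: "\<And>s. D (s + Suc L) \<le> \<rho> * D s + (\<Sum>j<Suc L. \<epsilon> (s + j))"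
  shows "(1 - \<rho>) * (\<Sum>\<tau><N + Suc L. (D \<tau>)\<^sup>2)
           \<le> (\<Sum>\<tau><Suc L. (D \<tau>)\<^sup>2) + Suc L / (1 - \<rho>) * Suc L * (\<Sum>\<sigma><N + L. (\<epsilon> \<sigma>)\<^sup>2)"
proof -
  define C where "C = Suc L / (1 - \<rho>)"
  have C: "0 \<le> C" using \<rho> by (simp add: C_def)
  have step: "(D (s + Suc L))\<^sup>2 \<le> \<rho> * (D s)\<^sup>2 + C * (\<Sum>j<Suc L. (\<epsilon> (s + j))\<^sup>2)" for s
  proof -
    have "(D (s + Suc L))\<^sup>2 \<le> (\<rho> * D s + (\<Sum>j<Suc L. \<epsilon> (s + j)))\<^sup>2"
      using contraction[of s] D by (intro power_mono) auto
    also have "\<dots> \<le> \<rho> * (D s)\<^sup>2 + (\<Sum>j<Suc L. \<epsilon> (s + j))\<^sup>2 / (1 - \<rho>)"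
      by (rule convex_combination_sq_le[OF \<rho>])
    also have "(\<Sum>j<Suc L. \<epsilon> (s + j))\<^sup>2 \<le> (\<Sum>j<Suc L. (\<epsilon> (s + j))\<^sup>2) * Suc L"
      using sum_squared_le_sum_of_squares[of "\<lambda>j. \<epsilon> (s + j)" "{..<Suc L}"] by simp
    finally show ?thesis
      using \<rho> by (simp add: C_def divide_right_mono mult.commute)
  qed
  have split: "(\<Sum>\<tau><N + Suc L. (D \<tau>)\<^sup>2) = (\<Sum>\<tau><Suc L. (D \<tau>)\<^sup>2) + (\<Sum>s<N. (D (s + Suc L))\<^sup>2)"
    using sum_lessThan_add_split[of "\<lambda>\<tau>. (D \<tau>)\<^sup>2" "Suc L" N] by (simp add: add.commute)
  have "(\<Sum>s<N. (D (s + Suc L))\<^sup>2) \<le> (\<Sum>s<N. \<rho> * (D s)\<^sup>2 + C * (\<Sum>j<Suc L. (\<epsilon> (s + j))\<^sup>2))"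
    by (intro sum_mono step)
  also have "\<dots> = \<rho> * (\<Sum>s<N. (D s)\<^sup>2) + C * (\<Sum>s<N. \<Sum>j<Suc L. (\<epsilon> (s + j))\<^sup>2)"
    by (simp only: sum.distrib sum_distrib_left)
  finally have tail: "(\<Sum>s<N. (D (s + Suc L))\<^sup>2)
      \<le> \<rho> * (\<Sum>s<N. (D s)\<^sup>2) + C * (\<Sum>s<N. \<Sum>j<Suc L. (\<epsilon> (s + j))\<^sup>2)" .
  have "\<rho> * (\<Sum>s<N. (D s)\<^sup>2) \<le> \<rho> * (\<Sum>\<tau><N + Suc L. (D \<tau>)\<^sup>2)"
    using \<rho> by (intro mult_left_mono sum_mono2) auto
  moreover have "C * (\<Sum>s<N. \<Sum>j<Suc L. (\<epsilon> (s + j))\<^sup>2) \<le> C * (Suc L * (\<Sum>\<sigma><N + L. (\<epsilon> \<sigma>)\<^sup>2))"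
    using C by (intro mult_left_mono sum_window_sums_le) auto
  ultimately show ?thesis
    unfolding left_diff_distrib mult_1_left mult.assoc C_def[symmetric] using split tail by linarith
qed

lemma window_contraction_sum_sq_bound:
  fixes D \<epsilon> :: "nat \<Rightarrow> real"
  assumes D: "\<And>s. 0 \<le> D s" and \<rho>: "0 \<le> \<rho>" "\<rho> < 1"
    and contraction: "\<And>s. D (s + Suc L) \<le> \<rho> * D s + (\<Sum>j<Suc L. \<epsilon> (s + j))"
  obtains K where "0 \<le> K" "\<And>M. (\<Sum>\<tau><Suc M. (D \<tau>)\<^sup>2) \<le> K * (1 + (\<Sum>\<sigma><M. (\<epsilon> \<sigma>)\<^sup>2))"
proof -
  define C where "C = Suc L / (1 - \<rho>) * Suc L"
  define P where "P = (\<Sum>\<tau><Suc L. (D \<tau>)\<^sup>2)"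
  define SE where "SE M = (\<Sum>\<sigma><M. (\<epsilon> \<sigma>)\<^sup>2)" for M
  have C: "0 \<le> C" and P: "0 \<le> P" and SE: "0 \<le> SE M" for M
    using \<rho> by (simp_all add: C_def P_def SE_def sum_nonneg)
  define K where "K = (P + C) / (1 - \<rho>) + P"
  have "(\<Sum>\<tau><Suc M. (D \<tau>)\<^sup>2) \<le> K * (1 + SE M)" for M
  proof (cases "M < L")
    case True
    have "(\<Sum>\<tau><Suc M. (D \<tau>)\<^sup>2) \<le> P"
      unfolding P_def using True by (intro sum_mono2) auto
    also have "P \<le> K * (1 + SE M)"
      using \<rho> P C SE[of M] by (simp add: K_def algebra_simps add_increasing)
    finally show ?thesis .
  next
    case False
    then obtain N where N: "M = N + L" by (metis add.commute le_add_diff_inverse not_less)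
    have "(1 - \<rho>) * (\<Sum>\<tau><Suc M. (D \<tau>)\<^sup>2) \<le> P + C * SE M"
      using window_contraction_sq_sum_le[OF D \<rho> contraction, of N]
      unfolding P_def C_def SE_def N by (simp only: add_Suc_right)
    then have "(\<Sum>\<tau><Suc M. (D \<tau>)\<^sup>2) \<le> (P + C * SE M) / (1 - \<rho>)"
      using \<rho> by (simp add: pos_le_divide_eq mult.commute)
    also have "\<dots> \<le> (P + C) * (1 + SE M) / (1 - \<rho>)"
    proof (rule divide_right_mono)
      have "(P + C) * (1 + SE M) = P + C * SE M + (P * SE M + C)"
        by (simp add: algebra_simps)
      then show "P + C * SE M \<le> (P + C) * (1 + SE M)"
        using P C SE[of M] by simp
    qed (use \<rho> in simp)
    also have "\<dots> \<le> K * (1 + SE M)"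
      using P SE[of M] by (simp add: K_def algebra_simps add_increasing)
    finally show ?thesis .
  qed
  moreover have "0 \<le> K" using \<rho> P C by (simp add: K_def)
  ultimately show ?thesis using that unfolding SE_def by blast
qed

lemma linear_growth_sum_sq_bound:
  fixes D :: "nat \<Rightarrow> real"
  assumes D: "\<And>s. 0 \<le> D s" and growth: "\<And>s. D (Suc s) \<le> C * (D s + 1)" and C: "0 \<le> C"
  obtains K where "0 \<le> K" "\<And>M. (\<Sum>\<tau><M + L. (D \<tau>)\<^sup>2) \<le> K * (1 + (\<Sum>\<tau><Suc M. (D \<tau>)\<^sup>2))"
proof -
  define G where "G = 2 * (C + 1) ^ (2 * L)"
  have G: "0 \<le> G" using C by (simp add: G_def)
  have iterate: "D (M + k) + 1 \<le> (C + 1) ^ k * (D M + 1)" for M k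
  proof (induction k)
    case (Suc k)
    have "D (M + Suc k) + 1 \<le> (C + 1) * (D (M + k) + 1)"
      using growth[of "M + k"] D[of "M + k"] by (simp add: algebra_simps)
    also have "\<dots> \<le> (C + 1) * ((C + 1) ^ k * (D M + 1))"
      using Suc C by (intro mult_left_mono) auto
    finally show ?case by simp
  qed simp
  have each: "(D (M + k))\<^sup>2 \<le> G * ((D M)\<^sup>2 + 1)" if "k < L" for M k
  proof -
    have "(D (M + k))\<^sup>2 \<le> ((C + 1) ^ k * (D M + 1))\<^sup>2"
      using iterate[of M k] D by (intro power_mono) auto
    also have "\<dots> \<le> ((C + 1) ^ L * (D M + 1))\<^sup>2"
      using that C D[of M] by (intro power_mono mult_right_mono power_increasing) auto
    also have "\<dots> = (C + 1) ^ (2 * L) * (D M + 1)\<^sup>2"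
      by (simp add: power_mult_distrib power_mult mult.commute[of 2])
    also have "(D M + 1)\<^sup>2 \<le> 2 * ((D M)\<^sup>2 + 1)"
      using zero_le_power2[of "D M - 1"] by (simp add: power2_eq_square algebra_simps)
    finally show ?thesis using C by (simp add: G_def algebra_simps)
  qed
  have "(\<Sum>\<tau><M + L. (D \<tau>)\<^sup>2) \<le> (1 + L * G) * (1 + (\<Sum>\<tau><Suc M. (D \<tau>)\<^sup>2))" for M
  proof -
    have "(\<Sum>\<tau><M + L. (D \<tau>)\<^sup>2) = (\<Sum>\<tau><M. (D \<tau>)\<^sup>2) + (\<Sum>k<L. (D (M + k))\<^sup>2)"
      by (rule sum_lessThan_add_split)
    also have "(\<Sum>k<L. (D (M + k))\<^sup>2) \<le> (\<Sum>k<L. G * ((D M)\<^sup>2 + 1))"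
      using each by (intro sum_mono) auto
    also have "(\<Sum>\<tau><M. (D \<tau>)\<^sup>2) + (\<Sum>k<L. G * ((D M)\<^sup>2 + 1))
        \<le> (1 + L * G) * (1 + (\<Sum>\<tau><Suc M. (D \<tau>)\<^sup>2))"
      using G by (simp add: algebra_simps sum_nonneg add_increasing mult_left_mono)
    finally show ?thesis by simp
  qed
  moreover have "0 \<le> 1 + L * G" using G by simp
  ultimately show ?thesis using that by blast
qed

text \<open>The energies \<epsilon> are controlled by the weighted sum of D (hypothesis descent), and that sum
  is split by AM-GM into the summable squares of \<alpha> and a small multiple of the squares of D.\<close>

lemma descent_energy_bounded:
  fixes D \<epsilon> \<alpha> :: "nat \<Rightarrow> real"
  assumes window: "\<And>M. (\<Sum>\<tau><M + L. (D \<tau>)\<^sup>2) \<le> K * (1 + (\<Sum>\<sigma><M. (\<epsilon> \<sigma>)\<^sup>2))" and K: "0 < K"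
    and descent: "\<And>N. \<kappa> * (\<Sum>\<sigma><N. (\<epsilon> \<sigma>)\<^sup>2) \<le> B + (\<Sum>\<tau><N + L. \<alpha> \<tau> * D \<tau>)"
    and \<kappa>: "0 < \<kappa>" and \<alpha>: "summable (\<lambda>s. (\<alpha> s)\<^sup>2)"
  shows "\<exists>C. \<forall>M. (\<Sum>\<sigma><M. (\<epsilon> \<sigma>)\<^sup>2) \<le> C"
proof (intro exI allI)
  fix M
  define SE where "SE = (\<Sum>\<sigma><M. (\<epsilon> \<sigma>)\<^sup>2)"
  define e where "e = \<kappa> / K"
  have e: "0 < e" using \<kappa> K by (simp add: e_def)
  define S\<alpha> where "S\<alpha> = (\<Sum>s. (\<alpha> s)\<^sup>2)"
  have amgm: "\<alpha> \<tau> * D \<tau> \<le> (\<alpha> \<tau>)\<^sup>2 / (2 * e) + e / 2 * (D \<tau>)\<^sup>2" for \<tau>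
  proof -
    have "0 \<le> (\<alpha> \<tau> - e * D \<tau>)\<^sup>2" by simp
    then show ?thesis using e by (simp add: field_simps power2_eq_square)
  qed
  have "(\<Sum>\<tau><M + L. \<alpha> \<tau> * D \<tau>) \<le> (\<Sum>\<tau><M + L. (\<alpha> \<tau>)\<^sup>2 / (2 * e) + e / 2 * (D \<tau>)\<^sup>2)"
    by (intro sum_mono amgm)
  also have "\<dots> = (\<Sum>\<tau><M + L. (\<alpha> \<tau>)\<^sup>2) / (2 * e) + e / 2 * (\<Sum>\<tau><M + L. (D \<tau>)\<^sup>2)"
    by (simp only: sum.distrib sum_divide_distrib sum_distrib_left)
  finally have "(\<Sum>\<tau><M + L. \<alpha> \<tau> * D \<tau>)
      \<le> (\<Sum>\<tau><M + L. (\<alpha> \<tau>)\<^sup>2) / (2 * e) + e / 2 * (\<Sum>\<tau><M + L. (D \<tau>)\<^sup>2)" .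
  moreover have "(\<Sum>\<tau><M + L. (\<alpha> \<tau>)\<^sup>2) / (2 * e) \<le> S\<alpha> / (2 * e)"
    unfolding S\<alpha>_def using e by (intro divide_right_mono sum_le_suminf[OF \<alpha>]) auto
  moreover have "e / 2 * (\<Sum>\<tau><M + L. (D \<tau>)\<^sup>2) \<le> e / 2 * (K * (1 + SE))"
    using window[of M] e unfolding SE_def by (intro mult_left_mono) auto
  moreover have "e / 2 * (K * (1 + SE)) = \<kappa> / 2 * (1 + SE)"
    using K by (simp add: e_def)
  ultimately have "\<kappa> * SE \<le> B + S\<alpha> / (2 * e) + \<kappa> / 2 * (1 + SE)"
    using descent[of M, folded SE_def] by linarith
  then show "SE \<le> (2 * B + S\<alpha> / e) / \<kappa> + 1" using \<kappa> e by (simp add: field_simps)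
qed

lemma tendsto_zero_of_window_contraction:
  fixes D \<epsilon> \<alpha> :: "nat \<Rightarrow> real"
  assumes D: "\<And>s. 0 \<le> D s" and \<rho>: "0 \<le> \<rho>" "\<rho> < 1"
    and contraction: "\<And>s. D (s + Suc L) \<le> \<rho> * D s + (\<Sum>j<Suc L. \<epsilon> (s + j))"
    and growth: "\<And>s. D (Suc s) \<le> C * (D s + 1)" "0 \<le> C"
    and descent: "\<And>N. \<kappa> * (\<Sum>\<sigma><N. (\<epsilon> \<sigma>)\<^sup>2) \<le> B + (\<Sum>\<tau><N + Suc L. \<alpha> \<tau> * D \<tau>)"
    and \<kappa>: "0 < \<kappa>" and \<alpha>: "summable (\<lambda>s. (\<alpha> s)\<^sup>2)"
  shows "D \<longlonglongrightarrow> 0"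
proof -
  define SE where "SE M = (\<Sum>\<sigma><M. (\<epsilon> \<sigma>)\<^sup>2)" for M
  have SE: "0 \<le> SE M" for M by (simp add: SE_def sum_nonneg)
  obtain KA where KA: "0 \<le> KA" "\<And>M. (\<Sum>\<tau><Suc M. (D \<tau>)\<^sup>2) \<le> KA * (1 + SE M)"
    using window_contraction_sum_sq_bound[OF D \<rho> contraction] unfolding SE_def by blast
  obtain KG where KG: "0 \<le> KG" "\<And>M. (\<Sum>\<tau><M + Suc L. (D \<tau>)\<^sup>2) \<le> KG * (1 + (\<Sum>\<tau><Suc M. (D \<tau>)\<^sup>2))"
    using linear_growth_sum_sq_bound[of D C "Suc L", OF D growth] by blast
  define KC where "KC = KG * (1 + KA) + 1"
  have KC: "0 < KC"
    unfolding KC_def using KA(1) KG(1) by (intro add_nonneg_pos mult_nonneg_nonneg) auto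
  have "(\<Sum>\<tau><M + Suc L. (D \<tau>)\<^sup>2) \<le> KC * (1 + SE M)" for M
  proof -
    have "(\<Sum>\<tau><M + Suc L. (D \<tau>)\<^sup>2) \<le> KG * (1 + KA * (1 + SE M))"
      using KG KA(2)[of M] by (meson add_left_mono mult_left_mono order_trans)
    also have "\<dots> \<le> KC * (1 + SE M)"
      using KA KG SE[of M] by (simp add: KC_def algebra_simps mult_left_mono add_increasing)
    finally show ?thesis .
  qed
  then obtain Bs where Bs: "\<And>M. SE M \<le> Bs"
    using descent_energy_bounded[OF _ KC descent \<kappa> \<alpha>] unfolding SE_def by blast
  have "(\<Sum>\<tau><n. (D \<tau>)\<^sup>2) \<le> KA * (1 + Bs)" for n
  proof (cases n)
    case 0
    then show ?thesis using KA(1) Bs[of 0] SE[of 0] by simp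
  next
    case (Suc M)
    then show ?thesis
      using KA Bs[of M] by (meson add_left_mono mult_left_mono order_trans)
  qed
  then have "summable (\<lambda>\<tau>. (D \<tau>)\<^sup>2)" by (intro summableI_nonneg_bounded) auto
  then have "(\<lambda>\<tau>. (D \<tau>)\<^sup>2) \<longlonglongrightarrow> 0" by (rule summable_LIMSEQ_zero)
  then have "(\<lambda>\<tau>. sqrt ((D \<tau>)\<^sup>2)) \<longlonglongrightarrow> sqrt 0" by (rule tendsto_real_sqrt)
  then show ?thesis using D by simp
qed

section \<open>Projected consensus iterations\<close>

text \<open>The common point z stands for an optimal point: by objective_gap, points of the sets Om
  with mutual distances at most \<Delta> are better than z along c by at most K \<Delta>.\<close>

locale projected_consensus = ujsc_weights E a \<gamma> S
  for E :: "nat \<Rightarrow> ('m::finite \<times> 'm) set" and a \<gamma> S +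
  fixes Om :: "'m \<Rightarrow> 'v::euclidean_space set" and c :: 'v and \<alpha> :: "nat \<Rightarrow> real"
    and \<theta> :: "nat \<Rightarrow> 'm \<Rightarrow> 'v" and z :: 'v and K :: real
  assumes closed_Om: "\<And>i. closed (Om i)" and convex_Om: "\<And>i. convex (Om i)"
    and common_point: "\<And>i. z \<in> Om i"
    and objective_gap: "\<And>p \<Delta> j. (\<And>k. p k \<in> Om k) \<Longrightarrow> (\<And>k l. norm (p k - p l) \<le> \<Delta>)
                          \<Longrightarrow> inner c z - inner c (p j) \<le> K * \<Delta>"
    and K_pos: "0 < K"
    and step_pos: "\<And>t. 0 < \<alpha> t" and step_mono: "\<And>t. \<alpha> (Suc t) \<le> \<alpha> t"
    and step_sq_summable: "summable (\<lambda>t. (\<alpha> t)\<^sup>2)"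
    and initial: "\<And>i. \<theta> 0 i \<in> Om i"
    and iteration: "\<And>t i. \<theta> (Suc t) i
                      = closest_point (Om i) ((\<Sum>j\<in>UNIV. a t i j *\<^sub>R \<theta> t j) - \<alpha> t *\<^sub>R c)"
begin

definition mix :: "nat \<Rightarrow> 'm \<Rightarrow> 'v" where
  "mix t i = (\<Sum>j\<in>UNIV. a t i j *\<^sub>R \<theta> t j)"

definition residual :: "nat \<Rightarrow> 'm \<Rightarrow> 'v" where
  "residual t i = \<theta> (Suc t) i - (mix t i - \<alpha> t *\<^sub>R c)"

definition max_residual :: "nat \<Rightarrow> real" where
  "max_residual t = Max (range (\<lambda>i. norm (residual t i)))"

definition disagreement :: "nat \<Rightarrow> real" where
  "disagreement t = diameter (range (\<theta> t))"

definition sq_dist :: "nat \<Rightarrow> 'm \<Rightarrow> real" where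
  "sq_dist t i = (norm (\<theta> t i - z))\<^sup>2"

definition max_sq_dist :: "nat \<Rightarrow> real" where
  "max_sq_dist t = Max (range (sq_dist t))"

definition drift :: "nat \<Rightarrow> real" where
  "drift t = 2 * \<alpha> t * K * disagreement t + (\<alpha> t)\<^sup>2 * (norm c)\<^sup>2"

definition increment_bound :: "nat \<Rightarrow> real" where
  "increment_bound t = 2 * disagreement t + 2 * \<alpha> t * norm c"

lemma iterate_in_Om: "\<theta> t i \<in> Om i"
proof (cases t)
  case (Suc t')
  show ?thesis
    unfolding Suc iteration by (rule closest_point_in_set[OF closed_Om]) (use common_point in blast)
qed (simp add: initial)

lemma iteration_residual: "\<theta> (Suc t) i = mix t i - \<alpha> t *\<^sub>R c + residual t i"
  by (simp add: residual_def)

lemma norm_le_disagreement: "norm (\<theta> t i - \<theta> t j) \<le> disagreement t"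
  unfolding disagreement_def dist_norm[symmetric]
  by (rule diameter_bounded_bound) (auto intro: finite_imp_bounded)

lemma disagreement_nonneg: "0 \<le> disagreement t"
  using norm_le_disagreement[of t undefined undefined] by simp

lemma disagreement_le: "(\<And>i j. norm (\<theta> t i - \<theta> t j) \<le> d) \<Longrightarrow> disagreement t \<le> d"
  unfolding disagreement_def by (rule diameter_le) auto

lemma norm_mix_diff_le: "norm (mix t i - mix t l) \<le> disagreement t"
  unfolding mix_def
  by (rule norm_diff_stochastic_combinations_le[OF row_stochastic row_stochastic norm_le_disagreement])

lemma norm_mix_minus_iterate_le: "norm (mix t i - \<theta> t i) \<le> disagreement t"
proof -
  have "(\<Sum>j\<in>UNIV. (if j = i then 1 else 0) *\<^sub>R \<theta> t j) = (\<Sum>j\<in>UNIV. if j = i then \<theta> t j else 0)"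
    by (intro sum.cong) auto
  then have "(\<Sum>j\<in>UNIV. (if j = i then 1 else 0) *\<^sub>R \<theta> t j) = \<theta> t i"
    by simp
  then show ?thesis
    using norm_diff_stochastic_combinations_le[OF row_stochastic[of t i] stochastic_indicator[of i],
        where x="\<theta> t", OF norm_le_disagreement]
    by (simp add: mix_def)
qed

lemma norm_residual_le: "norm (residual t i) \<le> disagreement t + \<alpha> t * norm c"
proof -
  let ?v = "mix t i - \<alpha> t *\<^sub>R c"
  have "norm (residual t i) = dist ?v (closest_point (Om i) ?v)"
    by (simp add: residual_def iteration mix_def dist_norm norm_minus_commute)
  also have "\<dots> \<le> dist ?v (\<theta> t i)"
    by (rule closest_point_le[OF closed_Om iterate_in_Om])
  also have "\<dots> = norm ((mix t i - \<theta> t i) - \<alpha> t *\<^sub>R c)"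
    by (simp add: dist_norm algebra_simps)
  also have "\<dots> \<le> disagreement t + \<alpha> t * norm c"
    using norm_triangle_ineq4[of "mix t i - \<theta> t i" "\<alpha> t *\<^sub>R c"] norm_mix_minus_iterate_le[of t i]
      step_pos[of t] by simp
  finally show ?thesis .
qed

lemma norm_residual_le_max: "norm (residual t i) \<le> max_residual t"
  unfolding max_residual_def by (rule Max_ge) auto

lemma max_residual_attained: obtains i where "max_residual t = norm (residual t i)"
proof -
  have "max_residual t \<in> range (\<lambda>i. norm (residual t i))"
    unfolding max_residual_def by (rule Max_in) auto
  then show ?thesis using that by (metis rangeE)
qed

lemma disagreement_Suc_le: "disagreement (Suc t) \<le> 3 * disagreement t + 2 * \<alpha> t * norm c"
proof (rule disagreement_le)
  fix i l
  have "\<theta> (Suc t) i - \<theta> (Suc t) l = (mix t i - mix t l) + (residual t i - residual t l)"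
    by (simp add: iteration_residual algebra_simps)
  then have "norm (\<theta> (Suc t) i - \<theta> (Suc t) l)
      \<le> norm (mix t i - mix t l) + norm (residual t i - residual t l)"
    by (simp add: norm_triangle_ineq)
  moreover have "norm (residual t i - residual t l) \<le> norm (residual t i) + norm (residual t l)"
    by (rule norm_triangle_ineq4)
  ultimately show "norm (\<theta> (Suc t) i - \<theta> (Suc t) l) \<le> 3 * disagreement t + 2 * \<alpha> t * norm c"
    using norm_mix_diff_le[of t i l] norm_residual_le[of t i] norm_residual_le[of t l] by linarith
qed

lemma disagreement_window:
  "disagreement (s + Suc (CARD('m) * S))
     \<le> (1 - \<gamma> ^ Suc (CARD('m) * S)) * disagreement s
       + (\<Sum>j<Suc (CARD('m) * S). 2 * max_residual (s + j))"
proof (rule disagreement_le)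
  fix i l
  have "norm (\<theta> (s + Suc (CARD('m) * S)) i - \<theta> (s + Suc (CARD('m) * S)) l)
      \<le> (1 - \<gamma> ^ Suc (CARD('m) * S)) * disagreement s
        + 2 * (\<Sum>j<Suc (CARD('m) * S). max_residual (s + j))"
  proof (rule consensus_contraction[where c="\<lambda>\<tau>. - (\<alpha> \<tau> *\<^sub>R c)"])
    show "norm (\<theta> (Suc \<tau>) k - (\<Sum>j\<in>UNIV. a \<tau> k j *\<^sub>R \<theta> \<tau> j) - - (\<alpha> \<tau> *\<^sub>R c)) \<le> max_residual \<tau>"
      for \<tau> k
      using norm_residual_le_max[of \<tau> k] by (simp add: residual_def mix_def algebra_simps)
  qed (simp_all add: norm_le_disagreement)
  then show "norm (\<theta> (s + Suc (CARD('m) * S)) i - \<theta> (s + Suc (CARD('m) * S)) l)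
      \<le> (1 - \<gamma> ^ Suc (CARD('m) * S)) * disagreement s
        + (\<Sum>j<Suc (CARD('m) * S). 2 * max_residual (s + j))"
    by (simp add: sum_distrib_left)
qed

lemma sq_dist_Suc_le:
  "sq_dist (Suc t) i + (norm (residual t i))\<^sup>2 \<le> (\<Sum>j\<in>UNIV. a t i j * sq_dist t j) + drift t"
proof -
  have gap: "- (K * disagreement t) \<le> inner (\<theta> t j - z) c" for j
    using objective_gap[of "\<theta> t" "disagreement t" j, OF iterate_in_Om norm_le_disagreement]
    by (simp add: inner_diff_right inner_commute)
  show ?thesis
    using projected_step_sq_dist_le[OF convex_Om[of i] closed_Om[of i] common_point[of i]
        row_stochastic[of t i] less_imp_le[OF step_pos[of t]], where x="\<theta> t", OF gap]
    by (simp add: sq_dist_def drift_def residual_def mix_def iteration mult.assoc add.assoc)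
qed

lemma sq_dist_le_max: "sq_dist t i \<le> max_sq_dist t"
  unfolding max_sq_dist_def by (rule Max_ge) auto

lemma max_sq_dist_le: "(\<And>i. sq_dist t i \<le> b) \<Longrightarrow> max_sq_dist t \<le> b"
  unfolding max_sq_dist_def by (subst Max_le_iff) auto

lemma max_sq_dist_nonneg: "0 \<le> max_sq_dist t"
  by (rule order_trans[OF _ sq_dist_le_max[of t undefined]]) (simp add: sq_dist_def)

lemma averaged_sq_dist_le: "(\<Sum>j\<in>UNIV. a t i j * sq_dist t j) \<le> max_sq_dist t"
proof -
  have "(\<Sum>j\<in>UNIV. a t i j * sq_dist t j) \<le> (\<Sum>j\<in>UNIV. a t i j * max_sq_dist t)"
    by (intro sum_mono mult_left_mono sq_dist_le_max weight_nonneg)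
  then show ?thesis using row_stochastic by simp
qed

lemma sq_dist_Suc_le_max: "sq_dist (Suc t) i \<le> max_sq_dist t + drift t - (norm (residual t i))\<^sup>2"
  using sq_dist_Suc_le[of t i] averaged_sq_dist_le[of t i] by linarith

lemma max_sq_dist_Suc_le: "max_sq_dist (Suc t) \<le> max_sq_dist t + drift t"
proof (rule max_sq_dist_le)
  show "sq_dist (Suc t) i \<le> max_sq_dist t + drift t" for i
    using sq_dist_Suc_le_max[of t i] zero_le_power2[of "norm (residual t i)"] by linarith
qed

text \<open>The largest residual at time t lowers the squared distance of one agent; the deficit
  propagates to all agents within one window.\<close>

lemma max_sq_dist_window:
  "max_sq_dist (t + Suc (CARD('m) * S))
     \<le> max_sq_dist t + (\<Sum>\<tau><Suc (CARD('m) * S). drift (t + \<tau>))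
       - \<gamma> ^ (CARD('m) * S) * (max_residual t)\<^sup>2"
proof (rule max_sq_dist_le)
  fix i
  obtain jm where jm: "max_residual t = norm (residual t jm)"
    using max_residual_attained by blast
  have bound: "sq_dist (Suc t + CARD('m) * S) i
      \<le> max_sq_dist t + drift t + (\<Sum>\<tau><CARD('m) * S. drift (Suc t + \<tau>))
        - \<gamma> ^ (CARD('m) * S) * (max_residual t)\<^sup>2"
  proof (rule deficit_propagation[where b=drift])
    show "sq_dist (Suc (Suc t + \<tau>)) k \<le> (\<Sum>j\<in>UNIV. a (Suc t + \<tau>) k j * sq_dist (Suc t + \<tau>) j)
        + drift (Suc t + \<tau>)" for \<tau> k
      using sq_dist_Suc_le[of "Suc t + \<tau>" k] zero_le_power2[of "norm (residual (Suc t + \<tau>) k)"]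
      by linarith
    show "sq_dist (Suc t) k \<le> max_sq_dist t + drift t" for k
      using sq_dist_Suc_le_max[of t k] zero_le_power2[of "norm (residual t k)"] by linarith
    show "sq_dist (Suc t) jm \<le> max_sq_dist t + drift t - (max_residual t)\<^sup>2"
      using sq_dist_Suc_le_max[of t jm] jm by simp
  qed simp_all
  have "drift t + (\<Sum>\<tau><CARD('m) * S. drift (Suc t + \<tau>)) = (\<Sum>\<tau><Suc (CARD('m) * S). drift (t + \<tau>))"
    unfolding sum.lessThan_Suc_shift by simp
  with bound show "sq_dist (t + Suc (CARD('m) * S)) i
      \<le> max_sq_dist t + (\<Sum>\<tau><Suc (CARD('m) * S). drift (t + \<tau>)) - \<gamma> ^ (CARD('m) * S) * (max_residual t)\<^sup>2"
    by (simp only: add_Suc_right add_Suc)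
qed

lemma drift_sum_le:
  "(\<Sum>\<tau><N. drift \<tau>) \<le> 2 * K * (\<Sum>\<tau><N. \<alpha> \<tau> * disagreement \<tau>) + (norm c)\<^sup>2 * (\<Sum>t. (\<alpha> t)\<^sup>2)"
proof -
  have "(\<Sum>\<tau><N. (\<alpha> \<tau>)\<^sup>2) \<le> (\<Sum>t. (\<alpha> t)\<^sup>2)"
    by (rule sum_le_suminf[OF step_sq_summable]) auto
  then have "(norm c)\<^sup>2 * (\<Sum>\<tau><N. (\<alpha> \<tau>)\<^sup>2) \<le> (norm c)\<^sup>2 * (\<Sum>t. (\<alpha> t)\<^sup>2)"
    by (intro mult_left_mono) auto
  moreover have "(\<Sum>\<tau><N. drift \<tau>)
      = 2 * K * (\<Sum>\<tau><N. \<alpha> \<tau> * disagreement \<tau>) + (norm c)\<^sup>2 * (\<Sum>\<tau><N. (\<alpha> \<tau>)\<^sup>2)"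
    by (simp add: drift_def sum.distrib sum_distrib_left algebra_simps)
  ultimately show ?thesis by linarith
qed

text \<open>Telescoping the window estimate: the maximal squared distance to z, corrected by the
  accumulated drift, decreases by a fixed fraction of every squared residual.\<close>

lemma residual_energy_bound:
  "\<gamma> ^ (CARD('m) * S) * (\<Sum>\<sigma><N. (max_residual \<sigma>)\<^sup>2)
     \<le> Suc (CARD('m) * S) * (max_sq_dist 0 + (norm c)\<^sup>2 * (\<Sum>t. (\<alpha> t)\<^sup>2)
          + 2 * K * (\<Sum>\<tau><N + Suc (CARD('m) * S). \<alpha> \<tau> * disagreement \<tau>))"
proof -
  define L where "L = Suc (CARD('m) * S)"
  define Q where "Q s = max_sq_dist s - (\<Sum>\<tau><s. drift \<tau>)" for s
  have "decseq Q"
  proof (rule decseq_SucI)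
    show "Q (Suc n) \<le> Q n" for n
      using max_sq_dist_Suc_le[of n] by (simp add: Q_def)
  qed
  then have Q_mono: "Q s' \<le> Q s" if "s \<le> s'" for s s'
    using that by (simp add: decseq_def)
  have Q_window: "\<gamma> ^ (CARD('m) * S) * (max_residual s)\<^sup>2 \<le> Q s - Q (s + L)" for s
    using max_sq_dist_window[of s] sum_lessThan_add_split[of drift s L]
    by (simp add: Q_def L_def)
  have "\<gamma> ^ (CARD('m) * S) * (\<Sum>\<sigma><N. (max_residual \<sigma>)\<^sup>2) \<le> (\<Sum>\<sigma><N. Q \<sigma> - Q (\<sigma> + L))"
    using Q_window by (simp add: sum_distrib_left sum_mono)
  also have "\<dots> = (\<Sum>j<L. Q j - Q (N + j))"
    by (rule sum_lessThan_diff_shift)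
  also have "\<dots> \<le> (\<Sum>j<L. Q 0 - Q (N + L))"
    by (intro sum_mono diff_mono Q_mono) auto
  also have "\<dots> = L * (Q 0 - Q (N + L))"
    by simp
  finally have energy: "\<gamma> ^ (CARD('m) * S) * (\<Sum>\<sigma><N. (max_residual \<sigma>)\<^sup>2) \<le> L * (Q 0 - Q (N + L))" .
  have "Q 0 - Q (N + L) \<le> max_sq_dist 0 + (\<Sum>\<tau><N + L. drift \<tau>)"
    using max_sq_dist_nonneg[of "N + L"] by (simp add: Q_def)
  also have "\<dots> \<le> max_sq_dist 0 + (norm c)\<^sup>2 * (\<Sum>t. (\<alpha> t)\<^sup>2)
                 + 2 * K * (\<Sum>\<tau><N + L. \<alpha> \<tau> * disagreement \<tau>)"
    using drift_sum_le[of "N + L"] by simp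
  finally show ?thesis
    using energy unfolding L_def by (meson mult_left_mono of_nat_0_le_iff order_trans)
qed

lemma disagreement_tendsto_zero: "disagreement \<longlonglongrightarrow> 0"
proof -
  define L where "L = CARD('m) * S"
  define B where "B = (max_sq_dist 0 + (norm c)\<^sup>2 * (\<Sum>t. (\<alpha> t)\<^sup>2)) / (2 * K)"
  define \<kappa> where "\<kappa> = \<gamma> ^ L / (8 * real (Suc L) * K)"
  show ?thesis
  proof (rule tendsto_zero_of_window_contraction[where \<epsilon>="\<lambda>\<sigma>. 2 * max_residual \<sigma>" and L=L
        and C="3 + 2 * \<alpha> 0 * norm c" and \<kappa>=\<kappa> and B=B, OF disagreement_nonneg])
    show "0 \<le> 1 - \<gamma> ^ Suc L" "1 - \<gamma> ^ Suc L < 1"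
      using gamma_pow_le_one[of "Suc L"] gamma_pos by simp_all
    show "disagreement (s + Suc L) \<le> (1 - \<gamma> ^ Suc L) * disagreement s + (\<Sum>j<Suc L. 2 * max_residual (s + j))"
      for s
      unfolding L_def by (rule disagreement_window)
    have "\<alpha> s \<le> \<alpha> 0" for s
      using step_mono by (induction s) (auto intro: order_trans)
    then show "disagreement (Suc s) \<le> (3 + 2 * \<alpha> 0 * norm c) * (disagreement s + 1)" for s
    proof -
      have "0 \<le> 2 * \<alpha> 0 * norm c * disagreement s"
        using step_pos[of 0] disagreement_nonneg[of s] by simp
      moreover have "2 * \<alpha> s * norm c \<le> 2 * \<alpha> 0 * norm c"
        using \<open>\<alpha> s \<le> \<alpha> 0\<close> by (simp add: mult_right_mono)
      ultimately show ?thesis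
        using disagreement_Suc_le[of s] disagreement_nonneg[of s] by (simp add: algebra_simps)
    qed
    show "0 \<le> 3 + 2 * \<alpha> 0 * norm c"
      using step_pos[of 0] by simp
    show "\<kappa> * (\<Sum>\<sigma><N. (2 * max_residual \<sigma>)\<^sup>2) \<le> B + (\<Sum>\<tau><N + Suc L. \<alpha> \<tau> * disagreement \<tau>)" for N
    proof -
      have "(\<Sum>\<sigma><N. (2 * max_residual \<sigma>)\<^sup>2) = 4 * (\<Sum>\<sigma><N. (max_residual \<sigma>)\<^sup>2)"
        by (simp add: power_mult_distrib sum_distrib_left)
      have n: "0 < real (Suc L)" by simp
      have "\<kappa> * (\<Sum>\<sigma><N. (2 * max_residual \<sigma>)\<^sup>2)
          = \<gamma> ^ L * (\<Sum>\<sigma><N. (max_residual \<sigma>)\<^sup>2) / (2 * real (Suc L) * K)"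
        unfolding \<kappa>_def \<open>(\<Sum>\<sigma><N. (2 * max_residual \<sigma>)\<^sup>2) = _\<close>
        using K_pos n by (simp add: field_simps del: of_nat_Suc)
      also have "\<dots> \<le> real (Suc L) * (max_sq_dist 0 + (norm c)\<^sup>2 * (\<Sum>t. (\<alpha> t)\<^sup>2)
            + 2 * K * (\<Sum>\<tau><N + Suc L. \<alpha> \<tau> * disagreement \<tau>)) / (2 * real (Suc L) * K)"
        using residual_energy_bound[of N] K_pos unfolding L_def by (intro divide_right_mono) auto
      also have "\<dots> = B + (\<Sum>\<tau><N + Suc L. \<alpha> \<tau> * disagreement \<tau>)"
        using K_pos n by (simp add: B_def field_simps del: of_nat_Suc)
      finally show ?thesis .
    qed
    show "0 < \<kappa>" using gamma_pos K_pos by (simp add: \<kappa>_def)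
  qed (rule step_sq_summable)
qed

lemma step_tendsto_zero: "\<alpha> \<longlonglongrightarrow> 0"
proof -
  have "(\<lambda>t. (\<alpha> t)\<^sup>2) \<longlonglongrightarrow> 0" by (rule summable_LIMSEQ_zero[OF step_sq_summable])
  then have "(\<lambda>t. sqrt ((\<alpha> t)\<^sup>2)) \<longlonglongrightarrow> sqrt 0" by (rule tendsto_real_sqrt)
  then show ?thesis using step_pos by (simp add: less_imp_le)
qed

lemma norm_increment_le: "norm (\<theta> (Suc t) i - \<theta> t i) \<le> increment_bound t"
proof -
  have eq: "\<theta> (Suc t) i - \<theta> t i = (mix t i - \<theta> t i) - \<alpha> t *\<^sub>R c + residual t i"
    by (simp add: iteration_residual)
  have "norm ((mix t i - \<theta> t i) - \<alpha> t *\<^sub>R c + residual t i)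
      \<le> norm (mix t i - \<theta> t i) + \<alpha> t * norm c + norm (residual t i)"
    using norm_triangle_ineq[of "(mix t i - \<theta> t i) - \<alpha> t *\<^sub>R c" "residual t i"]
      norm_triangle_ineq4[of "mix t i - \<theta> t i" "\<alpha> t *\<^sub>R c"] step_pos[of t]
    by simp
  then show ?thesis
    unfolding eq increment_bound_def
    using norm_mix_minus_iterate_le[of t i] norm_residual_le[of t i] by linarith
qed

lemma increment_bound_tendsto_zero: "increment_bound \<longlonglongrightarrow> 0"
  unfolding increment_bound_def
  using disagreement_tendsto_zero step_tendsto_zero by (auto intro!: tendsto_eq_intros)

end

section \<open>The epigraphic reformulation\<close>

lemma norm_fst_diff_le: "norm (fst p - fst q) \<le> norm (p - q)"
  by (metis fst_diff norm_fst_le prod.collapse)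

lemma abs_snd_nth_diff_le: "\<bar>snd p $ i - snd q $ i\<bar> \<le> norm (p - q)"
proof -
  have "norm (snd p - snd q) \<le> norm (p - q)" by (metis snd_diff norm_snd_le prod.collapse)
  then show ?thesis using component_le_norm_cart[of "snd p - snd q" i] by simp
qed

lemma inner_cvec: "inner (cvec :: (real^'n) \<times> (real^'m::finite)) p = (\<Sum>k\<in>UNIV. snd p $ k) / CARD('m)"
  by (cases p) (simp add: cvec_def inner_vec_def sum_divide_distrib)

lemma Omega_i_epigraph_residual_diff_le:
  assumes f: "L-lipschitz_on X (f i)"
    and p: "p \<in> Omega_i X f g Yk eps i" and q: "q \<in> Omega_i X f g Yk eps i"
  shows "\<bar>(f i (fst p) - snd p $ i) - (f i (fst q) - snd q $ i)\<bar> \<le> (L + 1) * norm (p - q)"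
proof -
  have "fst p \<in> X" "fst q \<in> X"
    using p q by (auto simp: Omega_i_def split: prod.splits)
  then have "\<bar>f i (fst p) - f i (fst q)\<bar> \<le> L * norm (fst p - fst q)"
    using lipschitz_onD[OF f] by (simp add: dist_real_def dist_norm)
  also have "\<dots> \<le> L * norm (p - q)"
    using lipschitz_on_nonneg[OF f] norm_fst_diff_le by (intro mult_left_mono)
  finally show ?thesis
    using abs_snd_nth_diff_le[of p i q] by (simp add: algebra_simps abs_le_iff)
qed

locale adrcp =
  fixes X :: "(real^'n) set" and f :: "'m::finite \<Rightarrow> real^'n \<Rightarrow> real"
    and g :: "'m \<Rightarrow> real^'n \<Rightarrow> real \<Rightarrow> real" and Yk :: "'m \<Rightarrow> real set" and eps :: "'m \<Rightarrow> real"
  assumes X_compact: "compact X" and X_convex: "convex X"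
    and f_convex: "\<And>i. convex_on UNIV (f i)"
    and g_convex: "\<And>i y. y \<in> Yk i \<Longrightarrow> convex_on UNIV (\<lambda>x. g i x y)"
    and Yk_finite: "\<And>i. finite (Yk i)"
    and slater_point: "\<exists>xt\<in>X. \<forall>i. \<forall>y\<in>Yk i. g i xt y < - eps i"
begin

definition feasible :: "real^'n \<Rightarrow> bool" where
  "feasible x \<longleftrightarrow> x \<in> X \<and> (\<forall>k. \<forall>y\<in>Yk k. g k x y \<le> - eps k)"

lemma closed_Omega_i: "closed (Omega_i X f g Yk eps i)"
proof -
  have eq: "Omega_i X f g Yk eps i = (X \<times> UNIV) \<inter> {p. f i (fst p) - snd p $ i \<le> 0}
              \<inter> (\<Inter>y\<in>Yk i. {p. g i (fst p) y \<le> - eps i})"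
    by (auto simp: Omega_i_def)
  have f_cont: "continuous_on UNIV (\<lambda>p::(real^'n) \<times> (real^'m). f i (fst p) - snd p $ i)"
    by (intro continuous_intros continuous_on_compose2[OF convex_on_continuous[OF open_UNIV f_convex]])
      auto
  have g_cont: "continuous_on UNIV (\<lambda>p::(real^'n) \<times> (real^'m). g i (fst p) y)" if "y \<in> Yk i" for y
    by (intro continuous_on_compose2[OF convex_on_continuous[OF open_UNIV g_convex[OF that]]]
        continuous_intros) auto
  show ?thesis
    unfolding eq
    by (intro closed_Int closed_Times[OF compact_imp_closed[OF X_compact] closed_UNIV] closed_INT ballI
        closed_Collect_le f_cont g_cont continuous_intros)
qed

lemma convex_Omega_i: "convex (Omega_i X f g Yk eps i)"
proof (rule convexI)
  fix p q and u v :: real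
  assume p: "p \<in> Omega_i X f g Yk eps i" and q: "q \<in> Omega_i X f g Yk eps i"
    and uv: "0 \<le> u" "0 \<le> v" "u + v = 1"
  obtain xp up xq uq where pq: "p = (xp, up)" "q = (xq, uq)" by fastforce
  have u: "u = 1 - v" and v: "v \<le> 1" using uv by simp_all
  have P: "xp \<in> X" "f i xp \<le> up $ i" "\<And>y. y \<in> Yk i \<Longrightarrow> g i xp y \<le> - eps i"
    and Q: "xq \<in> X" "f i xq \<le> uq $ i" "\<And>y. y \<in> Yk i \<Longrightarrow> g i xq y \<le> - eps i"
    using p q pq by (auto simp: Omega_i_def)
  have "u *\<^sub>R xp + v *\<^sub>R xq \<in> X" using X_convex P(1) Q(1) uv by (simp add: convexD)
  moreover have "f i (u *\<^sub>R xp + v *\<^sub>R xq) \<le> u * up $ i + v * uq $ i"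
    using convex_onD[OF f_convex[of i] uv(2) v UNIV_I UNIV_I, of xp xq]
      add_mono[OF mult_left_mono[OF P(2) uv(1)] mult_left_mono[OF Q(2) uv(2)]]
    unfolding u by linarith
  moreover have "g i (u *\<^sub>R xp + v *\<^sub>R xq) y \<le> - eps i" if y: "y \<in> Yk i" for y
  proof -
    have "g i (u *\<^sub>R xp + v *\<^sub>R xq) y \<le> u * g i xp y + v * g i xq y"
      using convex_onD[OF g_convex[OF y] uv(2) v UNIV_I UNIV_I, of xp xq] unfolding u by simp
    also have "\<dots> \<le> u * (- eps i) + v * (- eps i)"
      using uv P(3)[OF y] Q(3)[OF y] by (intro add_mono mult_left_mono) auto
    finally show ?thesis unfolding u by (simp add: algebra_simps)
  qed
  ultimately show "u *\<^sub>R p + v *\<^sub>R q \<in> Omega_i X f g Yk eps i"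
    by (simp add: pq Omega_i_def)
qed

lemma slater_slack:
  obtains xt \<sigma> where "xt \<in> X" "0 < \<sigma>" "\<And>k y. y \<in> Yk k \<Longrightarrow> g k xt y \<le> - eps k - \<sigma>"
proof -
  obtain xt where xt: "xt \<in> X" "\<And>k y. y \<in> Yk k \<Longrightarrow> g k xt y < - eps k"
    using slater_point by blast
  have strict: "g (fst p) xt (snd p) + eps (fst p) < 0" if "p \<in> Sigma UNIV Yk" for p
  proof -
    have "snd p \<in> Yk (fst p)" using that by (cases p) simp
    from xt(2)[OF this] show ?thesis by simp
  qed
  have finite: "finite (Sigma UNIV Yk)" using Yk_finite by auto
  have "\<exists>\<sigma>>0. \<forall>p\<in>Sigma UNIV Yk. g (fst p) xt (snd p) + eps (fst p) \<le> - \<sigma>"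
    using finite strict by (rule finite_slack)
  then obtain \<sigma> where \<sigma>: "0 < \<sigma>" "\<And>p. p \<in> Sigma UNIV Yk \<Longrightarrow> g (fst p) xt (snd p) + eps (fst p) \<le> - \<sigma>"
    by blast
  show ?thesis
  proof (rule that[OF xt(1) \<sigma>(1)])
    show "g k xt y \<le> - eps k - \<sigma>" if "y \<in> Yk k" for k y
      using \<sigma>(2)[of "(k, y)"] that by simp
  qed
qed

lemma optimum_exists:
  obtains xs where "feasible xs" "\<And>x. feasible x \<Longrightarrow> (\<Sum>k\<in>UNIV. f k xs) \<le> (\<Sum>k\<in>UNIV. f k x)"
proof -
  define F where "F = X \<inter> (\<Inter>k. \<Inter>y\<in>Yk k. {x. g k x y \<le> - eps k})"
  have F: "F = Collect feasible" by (auto simp: F_def feasible_def)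
  have "closed {x. g k x y \<le> - eps k}" if "y \<in> Yk k" for k y
    by (rule closed_Collect_le[OF convex_on_continuous[OF open_UNIV g_convex[OF that]]
          continuous_on_const])
  then have "closed (\<Inter>k. \<Inter>y\<in>Yk k. {x. g k x y \<le> - eps k})"
    by (intro closed_INT ballI) auto
  then have "compact F" unfolding F_def using X_compact by (rule compact_Int_closed[rotated])
  moreover obtain xt where xt: "xt \<in> X" "\<And>k y. y \<in> Yk k \<Longrightarrow> g k xt y < - eps k"
    using slater_point by blast
  then have "xt \<in> F" by (auto simp: F_def intro: less_imp_le)
  moreover have "continuous_on F (\<lambda>x. \<Sum>k\<in>UNIV. f k x)"
    by (intro continuous_on_sum continuous_on_subset[OF convex_on_continuous[OF open_UNIV f_convex]])
      auto
  ultimately obtain xs where "xs \<in> F" "\<forall>x\<in>F. (\<Sum>k\<in>UNIV. f k xs) \<le> (\<Sum>k\<in>UNIV. f k x)"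
    using continuous_attains_inf[of F] by blast
  then show ?thesis using that unfolding F by simp
qed

lemma lipschitz_constant:
  obtains L where "\<And>k. L-lipschitz_on X (f k)" "\<And>k y. y \<in> Yk k \<Longrightarrow> L-lipschitz_on X (\<lambda>x. g k x y)"
proof -
  have "\<exists>L. \<forall>k\<in>UNIV. L-lipschitz_on X (f k)"
    by (rule finite_family_lipschitz_on) (auto intro: convex_on_lipschitz_on_compact[OF f_convex X_compact])
  then obtain Lf where Lf: "\<And>k. Lf-lipschitz_on X (f k)" by blast
  have "\<exists>L. \<forall>p\<in>Sigma UNIV Yk. L-lipschitz_on X (\<lambda>x. g (fst p) x (snd p))"
  proof (rule finite_family_lipschitz_on)
    show "finite (Sigma UNIV Yk)" using Yk_finite by auto
    show "\<exists>L. L-lipschitz_on X (\<lambda>x. g (fst p) x (snd p))" if "p \<in> Sigma UNIV Yk" for p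
    proof -
      have "snd p \<in> Yk (fst p)" using that by (cases p) simp
      then show ?thesis by (intro convex_on_lipschitz_on_compact[OF g_convex X_compact])
    qed
  qed
  then obtain Lg where Lg: "\<And>k y. y \<in> Yk k \<Longrightarrow> Lg-lipschitz_on X (\<lambda>x. g k x y)"
    by fastforce
  show ?thesis
  proof (rule that)
    show "(max Lf Lg)-lipschitz_on X (f k)" for k
      by (rule lipschitz_on_le[OF Lf]) simp
    show "(max Lf Lg)-lipschitz_on X (\<lambda>x. g k x y)" if "y \<in> Yk k" for k y
      by (rule lipschitz_on_le[OF Lg[OF that]]) simp
  qed
qed

lemma feasible_convex_combination:
  assumes x: "x \<in> X" "\<And>k y. y \<in> Yk k \<Longrightarrow> g k x y \<le> - eps k + s" and s: "0 \<le> s"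
    and xt: "xt \<in> X" "\<And>k y. y \<in> Yk k \<Longrightarrow> g k xt y \<le> - eps k - \<sigma>" and \<sigma>: "0 < \<sigma>"
  shows "feasible ((1 - s / (s + \<sigma>)) *\<^sub>R x + (s / (s + \<sigma>)) *\<^sub>R xt)"
  unfolding feasible_def
proof (intro conjI allI ballI)
  have "0 \<le> s / (s + \<sigma>)" "s / (s + \<sigma>) \<le> 1" using s \<sigma> by auto
  then show "(1 - s / (s + \<sigma>)) *\<^sub>R x + (s / (s + \<sigma>)) *\<^sub>R xt \<in> X"
    using X_convex x(1) xt(1) unfolding convex_alt by blast
  show "g k ((1 - s / (s + \<sigma>)) *\<^sub>R x + (s / (s + \<sigma>)) *\<^sub>R xt) y \<le> - eps k" if y: "y \<in> Yk k" for k y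
  proof -
    have "convex_on UNIV (\<lambda>x. g k x y + eps k)"
      using g_convex[OF y] by (intro convex_on_add) (simp_all add: convex_on_const)
    then have "g k ((1 - s / (s + \<sigma>)) *\<^sub>R x + (s / (s + \<sigma>)) *\<^sub>R xt) y + eps k \<le> 0"
      by (rule convex_combination_restores_feasibility) (use x(2)[OF y] xt(2)[OF y] s \<sigma> in auto)
    then show ?thesis by simp
  qed
qed

lemma objective_le_of_near_feasible:
  assumes xs: "\<And>x. feasible x \<Longrightarrow> (\<Sum>k\<in>UNIV. f k xs) \<le> (\<Sum>k\<in>UNIV. f k x)"
    and L: "\<And>k. L-lipschitz_on X (f k)"
    and xt: "xt \<in> X" "\<And>k y. y \<in> Yk k \<Longrightarrow> g k xt y \<le> - eps k - \<sigma>" and \<sigma>: "0 < \<sigma>"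
    and x: "x \<in> X" "\<And>k y. y \<in> Yk k \<Longrightarrow> g k x y \<le> - eps k + s" and s: "0 \<le> s"
  shows "(\<Sum>k\<in>UNIV. f k xs) \<le> (\<Sum>k\<in>UNIV. f k x) + s / \<sigma> * (CARD('m) * (L * diameter X))"
proof -
  define t where "t = s / (s + \<sigma>)"
  have t: "0 \<le> t" "t \<le> 1" "t \<le> s / \<sigma>"
    using s \<sigma> unfolding t_def by (auto intro: divide_left_mono)
  have bound: "f k xt - f k x \<le> L * diameter X" for k
  proof -
    have "f k xt - f k x \<le> L * dist xt x"
      using lipschitz_onD[OF L[of k] xt(1) x(1)] by (simp add: dist_real_def)
    also have "\<dots> \<le> L * diameter X"
      using lipschitz_on_nonneg[OF L]
      by (intro mult_left_mono diameter_bounded_bound[OF compact_imp_bounded[OF X_compact] xt(1) x(1)])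
    finally show ?thesis .
  qed
  have "(\<Sum>k\<in>UNIV. f k xt - f k x) \<le> (\<Sum>k\<in>(UNIV :: 'm set). L * diameter X)"
    by (intro sum_mono) (rule bound)
  then have "t * (\<Sum>k\<in>UNIV. f k xt - f k x) \<le> t * (CARD('m) * (L * diameter X))"
    using t(1) by (simp add: mult_left_mono)
  also have "\<dots> \<le> s / \<sigma> * (CARD('m) * (L * diameter X))"
    using t(3) lipschitz_on_nonneg[OF L] diameter_ge_0[OF compact_imp_bounded[OF X_compact]]
    by (intro mult_right_mono) auto
  finally have gain: "t * (\<Sum>k\<in>UNIV. f k xt - f k x) \<le> s / \<sigma> * (CARD('m) * (L * diameter X))" .
  have "(\<Sum>k\<in>UNIV. f k xs) \<le> (\<Sum>k\<in>UNIV. f k ((1 - t) *\<^sub>R x + t *\<^sub>R xt))"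
    unfolding t_def by (rule xs[OF feasible_convex_combination[OF x s xt \<sigma>]])
  also have "\<dots> \<le> (\<Sum>k\<in>UNIV. (1 - t) * f k x + t * f k xt)"
    by (intro sum_mono convex_onD[OF f_convex t(1,2)]) auto
  also have "\<dots> = (\<Sum>k\<in>UNIV. f k x + t * (f k xt - f k x))"
    by (simp add: algebra_simps)
  also have "\<dots> = (\<Sum>k\<in>UNIV. f k x) + t * (\<Sum>k\<in>UNIV. f k xt - f k x)"
    by (simp only: sum.distrib sum_distrib_left)
  finally show ?thesis using gain by linarith
qed

text \<open>The point fst (p j) violates every constraint by at most L \<Delta>; moving it towards the Slater
  point restores feasibility at a cost of order \<Delta>, which bounds the optimal value from above.\<close>

lemma objective_gap_le:
  assumes xs: "\<And>x. feasible x \<Longrightarrow> (\<Sum>k\<in>UNIV. f k xs) \<le> (\<Sum>k\<in>UNIV. f k x)"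
    and Lf: "\<And>k. L-lipschitz_on X (f k)" and Lg: "\<And>k y. y \<in> Yk k \<Longrightarrow> L-lipschitz_on X (\<lambda>x. g k x y)"
    and xt: "xt \<in> X" "0 < \<sigma>" "\<And>k y. y \<in> Yk k \<Longrightarrow> g k xt y \<le> - eps k - \<sigma>"
    and p: "\<And>k. p k \<in> Omega_i X f g Yk eps k" and \<Delta>: "\<And>k l. norm (p k - p l) \<le> \<Delta>"
  shows "inner cvec (xs, \<chi> k. f k xs) - inner cvec (p j) \<le> (L * L * diameter X / \<sigma> + L + 1) * \<Delta>"
proof -
  define m where "m = real CARD('m)"
  have m: "0 < m" by (simp add: m_def)
  have L: "0 \<le> L" using lipschitz_on_nonneg[OF Lf] .
  have mem: "fst (p k) \<in> X" "f k (fst (p k)) \<le> snd (p k) $ k"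
    "\<And>y. y \<in> Yk k \<Longrightarrow> g k (fst (p k)) y \<le> - eps k" for k
    using p[of k] by (auto simp: Omega_i_def split: prod.splits)
  have \<Delta>0: "0 \<le> \<Delta>" using \<Delta>[of j j] by simp
  define x where "x = fst (p j)"
  have close: "L * norm (x - fst (p k)) \<le> L * \<Delta>" for k
    using norm_fst_diff_le[of "p j" "p k"] \<Delta>[of j k] L by (simp add: x_def mult_left_mono)
  have near: "g k x y \<le> - eps k + L * \<Delta>" if y: "y \<in> Yk k" for k y
    using lipschitz_onD[OF Lg[OF y] mem(1)[of j] mem(1)[of k]] mem(3)[OF y] close[of k]
    by (simp add: x_def dist_real_def dist_norm)
  have opt: "(\<Sum>k\<in>UNIV. f k xs) \<le> (\<Sum>k\<in>UNIV. f k x) + L * \<Delta> / \<sigma> * (m * (L * diameter X))"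
    unfolding m_def x_def
    by (rule objective_le_of_near_feasible[OF xs Lf xt(1,3,2) mem(1) near[unfolded x_def]])
      (use mult_nonneg_nonneg[OF L \<Delta>0] in simp_all)
  have "f k x - (L + 1) * \<Delta> \<le> snd (p j) $ k" for k
    using lipschitz_onD[OF Lf[of k] mem(1)[of j] mem(1)[of k]] close[of k] mem(2)[of k]
      abs_snd_nth_diff_le[of "p k" k "p j"] \<Delta>[of k j]
    by (simp add: x_def dist_real_def dist_norm algebra_simps)
  then have "(\<Sum>k\<in>UNIV. f k x) - m * ((L + 1) * \<Delta>) \<le> (\<Sum>k\<in>UNIV. snd (p j) $ k)"
    using sum_mono[of UNIV "\<lambda>k. f k x - (L + 1) * \<Delta>"] by (simp add: m_def sum_subtractf)
  then have "(\<Sum>k\<in>UNIV. f k xs) - (\<Sum>k\<in>UNIV. snd (p j) $ k)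
      \<le> m * (L * L * diameter X / \<sigma> * \<Delta> + (L + 1) * \<Delta>)"
    using opt by (simp add: algebra_simps)
  then have "((\<Sum>k\<in>UNIV. f k xs) - (\<Sum>k\<in>UNIV. snd (p j) $ k)) / m
      \<le> L * L * diameter X / \<sigma> * \<Delta> + (L + 1) * \<Delta>"
    using m by (simp add: pos_divide_le_eq mult.commute)
  moreover have "inner cvec (xs, \<chi> k. f k xs) - inner cvec (p j)
      = ((\<Sum>k\<in>UNIV. f k xs) - (\<Sum>k\<in>UNIV. snd (p j) $ k)) / m"
    by (simp add: inner_cvec m_def diff_divide_distrib)
  ultimately show ?thesis by (simp add: algebra_simps)
qed

lemma objective_gap:
  obtains z K where "\<And>i. z \<in> Omega_i X f g Yk eps i" "0 < K"
    "\<And>p \<Delta> j. (\<And>k. p k \<in> Omega_i X f g Yk eps k) \<Longrightarrow> (\<And>k l. norm (p k - p l) \<le> \<Delta>)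
        \<Longrightarrow> inner cvec z - inner cvec (p j) \<le> K * \<Delta>"
proof -
  obtain xs where xs: "feasible xs" "\<And>x. feasible x \<Longrightarrow> (\<Sum>k\<in>UNIV. f k xs) \<le> (\<Sum>k\<in>UNIV. f k x)"
    by (rule optimum_exists) blast
  obtain L where Lf: "\<And>k. L-lipschitz_on X (f k)"
    and Lg: "\<And>k y. y \<in> Yk k \<Longrightarrow> L-lipschitz_on X (\<lambda>x. g k x y)"
    by (rule lipschitz_constant) blast
  obtain xt \<sigma> where xt: "xt \<in> X" "0 < \<sigma>" "\<And>k y. y \<in> Yk k \<Longrightarrow> g k xt y \<le> - eps k - \<sigma>"
    by (rule slater_slack) blast
  show ?thesis
  proof (rule that)
    show "(xs, \<chi> k. f k xs) \<in> Omega_i X f g Yk eps i" for i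
      using xs(1) by (simp add: Omega_i_def feasible_def)
    show "0 < L * L * diameter X / \<sigma> + L + 1"
      using lipschitz_on_nonneg[OF Lf] diameter_ge_0[OF compact_imp_bounded[OF X_compact]] xt(2)
      by (simp add: add_nonneg_pos)
  qed (rule objective_gap_le[OF xs(2) Lf Lg xt])
qed

lemma dpg_projected_consensus:
  assumes W: "ujsc_weights E a \<gamma> S"
    and step_pos: "\<And>t. 0 < \<alpha> t" and step_mono: "\<And>t. \<alpha> (Suc t) \<le> \<alpha> t"
    and step_sq: "summable (\<lambda>t. (\<alpha> t)\<^sup>2)"
    and dpg: "\<And>t i. \<theta> (Suc t) i = closest_point (Omega_i X f g Yk eps i)
                        ((\<Sum>j\<in>UNIV. a t i j *\<^sub>R \<theta> t j) - \<alpha> t *\<^sub>R cvec)"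
  obtains z K where "projected_consensus (\<lambda>t. E (Suc t)) (\<lambda>t. a (Suc t)) \<gamma> S (Omega_i X f g Yk eps)
                       cvec (\<lambda>t. \<alpha> (Suc t)) (\<lambda>t. \<theta> (Suc t)) z K"
proof -
  obtain z K where z: "\<And>i. z \<in> Omega_i X f g Yk eps i" and K: "0 < K"
    and gap: "\<And>p \<Delta> j. (\<And>k. p k \<in> Omega_i X f g Yk eps k) \<Longrightarrow> (\<And>k l. norm (p k - p l) \<le> \<Delta>)
                \<Longrightarrow> inner cvec z - inner cvec (p j) \<le> K * \<Delta>"
    by (rule objective_gap) blast
  have "projected_consensus (\<lambda>t. E (Suc t)) (\<lambda>t. a (Suc t)) \<gamma> S (Omega_i X f g Yk eps)
          cvec (\<lambda>t. \<alpha> (Suc t)) (\<lambda>t. \<theta> (Suc t)) z K"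
  proof (rule projected_consensus.intro[OF ujsc_weights.shift[OF W]], unfold_locales)
    show "\<theta> (Suc 0) i \<in> Omega_i X f g Yk eps i" for i
      unfolding dpg using z by (intro closest_point_in_set closed_Omega_i) blast
    show "summable (\<lambda>t. (\<alpha> (Suc t))\<^sup>2)"
      using summable_Suc_iff[of "\<lambda>t. (\<alpha> t)\<^sup>2"] step_sq by simp
  qed (use closed_Omega_i convex_Omega_i z K gap step_pos step_mono dpg in auto)
  then show ?thesis by (rule that)
qed

end

lemma eventually_consensus_bounds:
  fixes \<theta> :: "nat \<Rightarrow> 'm \<Rightarrow> 'v::real_normed_vector" and h :: "'m \<Rightarrow> 'v \<Rightarrow> real"
  assumes D: "D \<longlonglongrightarrow> 0" and q: "q \<longlonglongrightarrow> 0" and C: "0 \<le> C"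
    and spread: "\<And>t i j. norm (\<theta> (Suc t) i - \<theta> (Suc t) j) \<le> D t"
    and increment: "\<And>t i. norm (\<theta> (Suc (Suc t)) i - \<theta> (Suc t) i) \<le> q t"
    and h_lipschitz: "\<And>t i. \<bar>h i (\<theta> (Suc (Suc t)) i) - h i (\<theta> (Suc t) i)\<bar>
                             \<le> C * norm (\<theta> (Suc (Suc t)) i - \<theta> (Suc t) i)"
  shows "\<forall>e1 e2 e3. e1 > 0 \<longrightarrow> e2 > 0 \<longrightarrow> e3 > 0 \<longrightarrow>
           (\<exists>T::nat. T \<ge> 1 \<and> (\<forall>t\<ge>T. \<forall>i j.
              norm (\<theta> t i - \<theta> t j) \<le> e1 \<and>
              norm (\<theta> t i - \<theta> (t - 1) i) \<le> e2 \<and>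
              \<bar>h i (\<theta> t i) - h i (\<theta> (t - 1) i)\<bar> \<le> e3))"
proof (intro allI impI)
  fix e1 e2 e3 :: real assume e: "e1 > 0" "e2 > 0" "e3 > 0"
  have "\<forall>\<^sub>F t in sequentially. D t < e1 \<and> q t < min e2 (e3 / (C + 1))"
    using order_tendstoD(2)[OF D e(1)] order_tendstoD(2)[OF q, of "min e2 (e3 / (C + 1))"] e C
    by (auto intro: eventually_conj)
  then obtain N where N: "\<And>t. N \<le> t \<Longrightarrow> D t < e1 \<and> q t < min e2 (e3 / (C + 1))"
    unfolding eventually_sequentially by blast
  show "\<exists>T::nat. T \<ge> 1 \<and> (\<forall>t\<ge>T. \<forall>i j. norm (\<theta> t i - \<theta> t j) \<le> e1 \<and>
      norm (\<theta> t i - \<theta> (t - 1) i) \<le> e2 \<and> \<bar>h i (\<theta> t i) - h i (\<theta> (t - 1) i)\<bar> \<le> e3)"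
  proof (intro exI[of _ "N + 2"] conjI allI impI)
    fix t i j assume T: "N + 2 \<le> t"
    define s where "s = t - 2"
    have t: "t = Suc (Suc s)" and s: "N \<le> s" using T by (simp_all add: s_def)
    have "0 \<le> q s" using increment[where t=s and i=i] norm_ge_zero order_trans by blast
    then have "C * q s \<le> (C + 1) * q s" by (simp add: distrib_right)
    also have "(C + 1) * q s \<le> e3" using N[OF s] C by (simp add: field_simps)
    finally have "C * q s \<le> e3" .
    moreover have "C * norm (\<theta> (Suc (Suc s)) i - \<theta> (Suc s) i) \<le> C * q s"
      using increment[where t=s and i=i] C by (rule mult_left_mono)
    ultimately show "\<bar>h i (\<theta> t i) - h i (\<theta> (t - 1) i)\<bar> \<le> e3"
      using h_lipschitz[where t=s and i=i] t by simp
    have "D (Suc s) < e1" using N[of "Suc s"] s by simp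
    then show "norm (\<theta> t i - \<theta> t j) \<le> e1"
      using spread[where t="Suc s" and i=i and j=j] t by simp
    show "norm (\<theta> t i - \<theta> (t - 1) i) \<le> e2"
      using increment[where t=s and i=i] N[OF s] t by simp
  qed simp
qed

theorem corollary1:
  fixes X :: "(real^'n) set"
    and f :: "'m::finite \<Rightarrow> real^'n \<Rightarrow> real"
    and Y :: "'m \<Rightarrow> real set"
    and g :: "'m \<Rightarrow> real^'n \<Rightarrow> real \<Rightarrow> real"
    and Yk :: "'m \<Rightarrow> real set"
    and eps :: "'m \<Rightarrow> real"
    and E :: "nat \<Rightarrow> ('m \<times> 'm) set"
    and a :: "nat \<Rightarrow> 'm \<Rightarrow> 'm \<Rightarrow> real"
    and \<alpha> :: "nat \<Rightarrow> real"
    and \<theta> :: "nat \<Rightarrow> 'm \<Rightarrow> (real^'n) \<times> (real^'m)"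
  assumes X: "X \<noteq> {}" "compact X" "convex X"
    and f_convex: "\<And>i. convex_on UNIV (f i)"
    and Y: "\<And>i. Y i \<noteq> {} \<and> compact (Y i) \<and> convex (Y i)"
    and g_cont: "\<And>i. continuous_on (X \<times> Y i) (\<lambda>(x, y). g i x y)"
    and g_convex: "\<And>i y. y \<in> Y i \<Longrightarrow> convex_on UNIV (\<lambda>x. g i x y)"
    and Yk: "\<And>i. finite (Yk i) \<and> Yk i \<subseteq> Y i"
    and eps: "\<And>i. eps i > 0"
    and interior_point: "\<exists>xt\<in>X. \<forall>i. \<forall>y\<in>Yk i. g i xt y < - eps i"
    and ujsc: "UJSC E"
    and weights: "weight_rules E a"
    and step_pos: "\<And>t. \<alpha> t > 0"
    and step_sum: "\<not> summable \<alpha>"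
    and step_sq: "summable (\<lambda>t. (\<alpha> t)\<^sup>2)"
    and step_mono: "\<And>t. \<alpha> (Suc t) \<le> \<alpha> t"
    and dpg: "\<And>t i. \<theta> (Suc t) i =
                closest_point (Omega_i X f g Yk eps i)
                  ((\<Sum>j\<in>UNIV. a t i j *\<^sub>R \<theta> t j) - \<alpha> t *\<^sub>R cvec)"
  shows "(\<forall>e1 e2 e3. e1 > 0 \<longrightarrow> e2 > 0 \<longrightarrow> e3 > 0 \<longrightarrow>
            (\<exists>T::nat. T \<ge> 1 \<and> (\<forall>t\<ge>T. \<forall>i j.
               norm (\<theta> t i - \<theta> t j) \<le> e1 \<and>
               norm (\<theta> t i - \<theta> (t - 1) i) \<le> e2 \<and>
               \<bar>(f i (fst (\<theta> t i)) - snd (\<theta> t i) $ i)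
                 - (f i (fst (\<theta> (t - 1) i)) - snd (\<theta> (t - 1) i) $ i)\<bar> \<le> e3)))
         \<and> (\<forall>t\<ge>1. \<forall>i. \<theta> t i \<in> Omega_i X f g Yk eps i)"
proof -
  interpret adrcp X f g Yk eps
  proof
    show "convex_on UNIV (\<lambda>x. g i x y)" if "y \<in> Yk i" for i y
      using g_convex Yk that by blast
  qed (use X f_convex Yk interior_point in auto)
  obtain \<gamma> S where "ujsc_weights E a \<gamma> S"
    using weights ujsc by (rule ujsc_weights_of_weight_rules)
  then obtain z K where "projected_consensus (\<lambda>t. E (Suc t)) (\<lambda>t. a (Suc t)) \<gamma> S
      (Omega_i X f g Yk eps) cvec (\<lambda>t. \<alpha> (Suc t)) (\<lambda>t. \<theta> (Suc t)) z K"
    using step_pos step_mono step_sq dpg by (rule dpg_projected_consensus)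
  then interpret C: projected_consensus "\<lambda>t. E (Suc t)" "\<lambda>t. a (Suc t)" \<gamma> S "Omega_i X f g Yk eps"
    cvec "\<lambda>t. \<alpha> (Suc t)" "\<lambda>t. \<theta> (Suc t)" z K .
  obtain L where L: "\<And>k. L-lipschitz_on X (f k)"
    by (rule lipschitz_constant) blast
  have "\<forall>t\<ge>1. \<forall>i. \<theta> t i \<in> Omega_i X f g Yk eps i"
    using C.iterate_in_Om by (auto dest!: gr0_implies_Suc simp: Suc_le_eq)
  then show ?thesis
    using eventually_consensus_bounds[where h="\<lambda>i p. f i (fst p) - snd p $ i",
        OF C.disagreement_tendsto_zero C.increment_bound_tendsto_zero _ C.norm_le_disagreement
        C.norm_increment_le Omega_i_epigraph_residual_diff_le[OF L C.iterate_in_Om C.iterate_in_Om]]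
      lipschitz_on_nonneg[OF L] by simp
qed

end
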